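(* Let $\nu>0$, $0<K<\nu^2/2$, and let $(\Phi_m)$ satisfy the standing assumptions in the context. If $W\in\mathcal{C}_K$, then $\mathcal{T}(W)\in\mathcal{C}_K$.
   Context: $A_m f(\xi):=\int_{-m/2}^{m/2} f(\xi+s)\,ds$. $\Psi_m(r):=\Phi_m(\nu m-r)-\Phi_m(\nu m)+\Phi_m'(\nu m)r$ for $r\in[0,\nu m)$. $\partial\mathcal{P}(W):=\sum_{m\ge1}A_m\Psi_m'(A_mW)$, $\mu(W):=\|W\|_2/\|\partial\mathcal{P}(W)\|_2$, and $\mathcal{T}(W):=\mu(W)\,\partial\mathcal{P}(W)$. $\mathcal{C}$ is the $\mathsf{L}^2(\mathbb{R})$-closure of $\{W\in C_c^\infty(\mathbb{R}): W(x)=W(-x)\ge0,\ \dot W(x)=-\dot W(-x)\le0\ \forall x\ge0\}$; $\mathcal{C}_K:=\{W\in\mathcal{C}:\frac12\|W\|_2^2=K\}$. Standing assumptions: for every $m$, $\Phi_m:[0,\infty)\to[0,\infty)$, $\Phi_m\in C^4([0,\infty))$, $\Phi_m\ge0,\Phi_m'\le0,\Phi_m''\ge0,\Phi_m'''\le0,\Phi_m^{(4)}\ge0$ (strict for $m=1$, $s>0$); and for a fixed $\gamma\in(5/2,3)$ the series $\sum_m\Phi_m'(\nu m-\sqrt{2Km})m$, $\sum_m\Phi_m''(\nu m-\sqrt{2Km})m^2$, $\sum_m\Phi_m''(\nu m)m^\gamma$, $\sum_m\Phi_m'''(\nu m-\sqrt{2Km})m^{3/2}$ are finite. *)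

theory Defs
  imports "HOL-Analysis.Analysis"
begin

definition L2norm :: "(real \<Rightarrow> real) \<Rightarrow> real" where
  "L2norm f = sqrt (integral\<^sup>L lborel (\<lambda>x. (f x)^2))"

definition smooth_profile :: "(real \<Rightarrow> real) \<Rightarrow> bool" where
  "smooth_profile W \<longleftrightarrow>
     (\<exists>Ds :: nat \<Rightarrow> real \<Rightarrow> real.
        Ds 0 = W \<and>
        (\<forall>k x. (Ds k has_real_derivative Ds (Suc k) x) (at x)) \<and>
        (\<exists>R. \<forall>x. R < \<bar>x\<bar> \<longrightarrow> W x = 0) \<and>
        (\<forall>x\<ge>0. W x = W (-x) \<and> W x \<ge> 0 \<and> Ds 1 x = - Ds 1 (-x) \<and> Ds 1 x \<le> 0))"

text \<open>The cone C: L2-closure of the smooth profiles (as a set of representatives).\<close>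
definition cone :: "(real \<Rightarrow> real) set" where
  "cone = {W. W \<in> borel_measurable lborel \<and> integrable lborel (\<lambda>x. (W x)^2) \<and>
              (\<exists>F :: nat \<Rightarrow> real \<Rightarrow> real. (\<forall>n. smooth_profile (F n)) \<and>
                  (\<lambda>n. L2norm (\<lambda>x. F n x - W x)) \<longlonglongrightarrow> 0)}"

definition coneK :: "real \<Rightarrow> (real \<Rightarrow> real) set" where
  "coneK K = {W \<in> cone. (1/2) * (L2norm W)^2 = K}"

definition Aop :: "nat \<Rightarrow> (real \<Rightarrow> real) \<Rightarrow> real \<Rightarrow> real" where
  "Aop m f \<xi> = set_lebesgue_integral lborel {- real m / 2 .. real m / 2} (\<lambda>s. f (\<xi> + s))"

text \<open>dPhi m k is the k-th derivative of Phi_m.  Psi_m and its derivative.\<close>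
definition Psi :: "(nat \<Rightarrow> nat \<Rightarrow> real \<Rightarrow> real) \<Rightarrow> real \<Rightarrow> nat \<Rightarrow> real \<Rightarrow> real" where
  "Psi dPhi \<nu> m r = dPhi m 0 (\<nu> * real m - r) - dPhi m 0 (\<nu> * real m) + dPhi m 1 (\<nu> * real m) * r"

definition dPsi :: "(nat \<Rightarrow> nat \<Rightarrow> real \<Rightarrow> real) \<Rightarrow> real \<Rightarrow> nat \<Rightarrow> real \<Rightarrow> real" where
  "dPsi dPhi \<nu> m r = dPhi m 1 (\<nu> * real m) - dPhi m 1 (\<nu> * real m - r)"

definition dP :: "(nat \<Rightarrow> nat \<Rightarrow> real \<Rightarrow> real) \<Rightarrow> real \<Rightarrow> (real \<Rightarrow> real) \<Rightarrow> real \<Rightarrow> real" where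
  "dP dPhi \<nu> W \<xi> = (\<Sum>n. Aop (Suc n) (\<lambda>x. dPsi dPhi \<nu> (Suc n) (Aop (Suc n) W x)) \<xi>)"

definition muW :: "(nat \<Rightarrow> nat \<Rightarrow> real \<Rightarrow> real) \<Rightarrow> real \<Rightarrow> (real \<Rightarrow> real) \<Rightarrow> real" where
  "muW dPhi \<nu> W = L2norm W / L2norm (dP dPhi \<nu> W)"

definition Top :: "(nat \<Rightarrow> nat \<Rightarrow> real \<Rightarrow> real) \<Rightarrow> real \<Rightarrow> (real \<Rightarrow> real) \<Rightarrow> real \<Rightarrow> real" where
  "Top dPhi \<nu> W = (\<lambda>\<xi>. muW dPhi \<nu> W * dP dPhi \<nu> W \<xi>)"

end

theory Submission
  imports Defs
begin

text \<open>
  The cone \<open>C\<close> is closed in \<open>L\<^sup>2\<close> and stable under sums and nonnegative multiples.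
  The averaging operator \<open>A\<^sub>m\<close> maps smooth profiles to smooth profiles and has norm at most \<open>m\<close>
  on \<open>L\<^sup>2\<close>, so it maps \<open>C\<close> into \<open>C\<close>. By Cauchy--Schwarz, \<open>A\<^sub>m W\<close> takes values in
  \<open>[0, \<surd>(2Km)]\<close>, and \<open>\<surd>(2Km) < \<nu>m\<close> because \<open>K < \<nu>\<^sup>2/2\<close>. On that interval
  \<open>\<Psi>\<^sub>m'\<close> is \<open>C\<^sup>1\<close>, nondecreasing and vanishes at \<open>0\<close>; it is a uniform limit of polynomials
  with the same properties (Weierstrass), and composing a smooth profile with such a polynomial
  gives a smooth profile. Hence every term \<open>A\<^sub>m \<Psi>\<^sub>m'(A\<^sub>m W)\<close> lies in \<open>C\<close>. Its norm is at most
  \<open>m\<^sup>2 \<Phi>\<^sub>m''(\<nu>m - \<surd>(2Km)) \<parallel>W\<parallel>\<close>, so the series \<open>\<partial>P(W)\<close> converges in \<open>L\<^sup>2\<close> and lies in \<open>C\<close>.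
  It is nonzero because \<open>\<Psi>\<^sub>1'\<close> is strictly increasing, and \<open>\<mu>(W)\<close> rescales it to the norm of \<open>W\<close>.
  Only the summability of \<open>\<Phi>\<^sub>m''(\<nu>m - \<surd>(2Km)) m\<^sup>2\<close> and the sign conditions up to order three
  are used.
\<close>

section \<open>Smooth functions\<close>

definition smooth :: "(real \<Rightarrow> real) \<Rightarrow> bool" where
  "smooth f \<longleftrightarrow> (\<forall>k x. ((deriv ^^ k) f) differentiable (at x))"

lemma smooth_DERIV:
  assumes "smooth f"
  shows "((deriv ^^ k) f has_real_derivative (deriv ^^ (Suc k)) f x) (at x)"
  using assms unfolding smooth_def
  by (simp add: DERIV_deriv_iff_real_differentiable)

lemma funpow_deriv_eq_derivative_sequence:
  assumes "\<And>k x. (D k has_real_derivative D (Suc k) x) (at x)"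
  shows "(deriv ^^ k) (D 0) = D k"
proof (induction k)
  case 0 then show ?case by simp
next
  case (Suc k)
  then show ?case by (auto intro!: ext DERIV_imp_deriv assms)
qed

lemma smoothI_derivative_sequence:
  assumes "\<And>k x. (D k has_real_derivative D (Suc k) x) (at x)" "f = D 0"
  shows "smooth f"
  unfolding smooth_def using funpow_deriv_eq_derivative_sequence[of D, OF assms(1)] assms
  by (metis real_differentiable_def)

lemma smoothE_derivative_sequence:
  assumes "smooth f"
  obtains D where "\<And>k x. (D k has_real_derivative D (Suc k) x) (at x)" "D 0 = f"
  using that[of "\<lambda>k. (deriv ^^ k) f"] smooth_DERIV[OF assms] by simp

lemma smooth_const: "smooth (\<lambda>x. c)"
  by (rule smoothI_derivative_sequence[where D="\<lambda>k. if k = 0 then (\<lambda>x. c) else (\<lambda>x. 0)"]) auto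

lemma smooth_add:
  assumes "smooth f" "smooth g" shows "smooth (\<lambda>x. f x + g x)"
proof -
  obtain D where D: "\<And>k x. (D k has_real_derivative D (Suc k) x) (at x)" "D 0 = f"
    using smoothE_derivative_sequence[OF assms(1)] by blast
  obtain E where E: "\<And>k x. (E k has_real_derivative E (Suc k) x) (at x)" "E 0 = g"
    using smoothE_derivative_sequence[OF assms(2)] by blast
  show ?thesis
    by (rule smoothI_derivative_sequence[where D="\<lambda>k x. D k x + E k x"])
       (auto intro!: DERIV_add D(1) E(1) simp: D(2) E(2))
qed

lemma smooth_uminus:
  assumes "smooth f" shows "smooth (\<lambda>x. - f x)"
proof -
  obtain D where D: "\<And>k x. (D k has_real_derivative D (Suc k) x) (at x)" "D 0 = f"
    using smoothE_derivative_sequence[OF assms] by blast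
  show ?thesis
    by (rule smoothI_derivative_sequence[where D="\<lambda>k x. - D k x"]) (auto intro!: DERIV_minus D(1) simp: D(2))
qed

lemma smooth_diff:
  assumes "smooth f" "smooth g" shows "smooth (\<lambda>x. f x - g x)"
  using smooth_add[OF assms(1) smooth_uminus[OF assms(2)]] by simp

lemma smooth_shift:
  assumes "smooth f" shows "smooth (\<lambda>x. f (x + c))"
proof -
  obtain D where D: "\<And>k x. (D k has_real_derivative D (Suc k) x) (at x)" "D 0 = f"
    using smoothE_derivative_sequence[OF assms] by blast
  show ?thesis
    by (rule smoothI_derivative_sequence[where D="\<lambda>k x. D k (x + c)"]) (auto simp: DERIV_shift[symmetric] D)
qed

lemma sum_atLeast0_atMost_shift_telescope:
  fixes f :: "nat \<Rightarrow> 'a::ab_group_add"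
  shows "sum f {0..n} = f 0 - f (Suc n) + sum (\<lambda>i. f (Suc i)) {0..n}"
  by (induct n) auto

lemma smooth_mult:
  assumes "smooth f" "smooth g" shows "smooth (\<lambda>x. f x * g x)"
proof -
  obtain D where D: "\<And>k x. (D k has_real_derivative D (Suc k) x) (at x)" "D 0 = f"
    using smoothE_derivative_sequence[OF assms(1)] by blast
  obtain E where E: "\<And>k x. (E k has_real_derivative E (Suc k) x) (at x)" "E 0 = g"
    using smoothE_derivative_sequence[OF assms(2)] by blast
  \<comment> \<open>the derivatives of the product are given by the Leibniz rule\<close>
  define P where "P = (\<lambda>n x. \<Sum>i = 0..n. real (n choose i) * D i x * E (n-i) x)"
  have "(P n has_real_derivative P (Suc n) x) (at x)" for n x
  proof -
    have Suc_choose: "Suc n choose k = (n choose k) + (if k = 0 then 0 else (n choose (k-1)))" for n k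
      by (cases k) simp_all
    have "(P n has_real_derivative (\<Sum>i = 0..n.
               real (n choose i) * (D (Suc i) x * E (n-i) x + E (Suc (n-i)) x * D i x))) (at x)"
      unfolding P_def
      apply (rule DERIV_sum)
      apply (rule derivative_eq_intros D E refl | simp)+
      apply (simp add: algebra_simps Suc_diff_le)
      done
    moreover have "(\<Sum>i = 0..n.
               real (n choose i) * (D (Suc i) x * E (n-i) x + E (Suc (n-i)) x * D i x)) =
            E 0 x * D (Suc n) x + (\<Sum>i = 0..n. D i x * (real (Suc n choose i) * E (Suc n - i) x))"
      apply (simp add: Suc_choose algebra_simps sum.distrib)
      apply (subst (4) sum_atLeast0_atMost_shift_telescope)
      apply (auto simp: algebra_simps Suc_diff_le intro: sum.cong)
      done
    moreover have "E 0 x * D (Suc n) x + (\<Sum>i = 0..n. D i x * (real (Suc n choose i) * E (Suc n - i) x))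
        = P (Suc n) x"
      unfolding P_def by (simp add: sum.atLeast0_atMost_Suc_shift algebra_simps)
    ultimately show ?thesis by simp
  qed
  moreover have "(\<lambda>x. f x * g x) = P 0" using D E by (auto simp: P_def)
  ultimately show ?thesis by (rule smoothI_derivative_sequence)
qed

lemma smooth_cmult:
  assumes "smooth f" shows "smooth (\<lambda>x. c * f x)"
  using smooth_mult[OF smooth_const assms] .

lemma smooth_power:
  assumes "smooth f" shows "smooth (\<lambda>x. f x ^ n)"
  by (induction n) (auto intro: smooth_const smooth_mult assms)

lemma smooth_sum:
  assumes "\<And>i. i \<in> S \<Longrightarrow> smooth (f i)" shows "smooth (\<lambda>x. \<Sum>i\<in>S. f i x)"
  using assms
proof (induction S rule: infinite_finite_induct)
  case (infinite A) then show ?case by (simp add: smooth_const)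
next
  case empty then show ?case by (simp add: smooth_const)
next
  case (insert x F) then show ?case by (auto intro!: smooth_add)
qed

lemma smooth_polynomial_comp:
  assumes "real_polynomial_function p" "smooth g"
  shows "smooth (\<lambda>x. p (g x))"
proof -
  obtain a n where "p = (\<lambda>x. \<Sum>i\<le>n. a i * x ^ i)"
    using assms(1) unfolding real_polynomial_function_iff_sum by blast
  then show ?thesis by (auto intro!: smooth_sum smooth_cmult smooth_power assms(2))
qed

lemma smooth_differentiable: "smooth f \<Longrightarrow> f differentiable (at x)"
  unfolding smooth_def by (metis funpow_0)

lemma smooth_has_real_derivative: "smooth f \<Longrightarrow> (f has_real_derivative deriv f x) (at x)"
  using smooth_DERIV[of f 0] by simp

lemma smooth_deriv: "smooth f \<Longrightarrow> smooth (deriv f)"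
  unfolding smooth_def by (metis comp_apply funpow_Suc_right)

lemma smooth_continuous_on: "smooth f \<Longrightarrow> continuous_on S f"
  by (meson continuous_at_imp_continuous_on differentiable_imp_continuous_within smooth_differentiable)

lemma smooth_borel_measurable: "smooth f \<Longrightarrow> f \<in> borel_measurable borel"
  by (simp add: borel_measurable_continuous_onI smooth_continuous_on)

lemma smooth_from_deriv:
  assumes "\<And>x. (f has_real_derivative g x) (at x)" "smooth g"
  shows "smooth f"
proof -
  obtain E where E: "\<And>k x. (E k has_real_derivative E (Suc k) x) (at x)" "E 0 = g"
    using smoothE_derivative_sequence[OF assms(2)] by blast
  show ?thesis
  proof (rule smoothI_derivative_sequence[where D="\<lambda>k. if k = 0 then f else E (k - 1)"])
    fix k x
    show "((if k = 0 then f else E (k - 1)) has_real_derivative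
        (if Suc k = 0 then f else E (Suc k - 1)) x) (at x)"
      by (cases k) (auto simp: assms E)
  qed simp
qed

section \<open>Smooth profiles\<close>

lemma smooth_profile_iff:
  "smooth_profile W \<longleftrightarrow> smooth W \<and> (\<exists>R. \<forall>x. R < \<bar>x\<bar> \<longrightarrow> W x = 0) \<and>
     (\<forall>x\<ge>0. W x = W (-x) \<and> W x \<ge> 0 \<and> deriv W x = - deriv W (-x) \<and> deriv W x \<le> 0)"
proof
  assume "smooth_profile W"
  then obtain Ds where Ds: "Ds 0 = W" "\<And>k x. (Ds k has_real_derivative Ds (Suc k) x) (at x)"
    "\<exists>R. \<forall>x. R < \<bar>x\<bar> \<longrightarrow> W x = 0"
    "\<forall>x\<ge>0. W x = W (-x) \<and> W x \<ge> 0 \<and> Ds 1 x = - Ds 1 (-x) \<and> Ds 1 x \<le> 0"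
    unfolding smooth_profile_def by blast
  have "deriv W x = Ds 1 x" for x
    using Ds(2)[of 0 x] Ds(1) by (simp add: DERIV_imp_deriv)
  then have "deriv W = Ds 1" by auto
  moreover have "smooth W" using smoothI_derivative_sequence[of Ds W] Ds by simp
  ultimately show "smooth W \<and> (\<exists>R. \<forall>x. R < \<bar>x\<bar> \<longrightarrow> W x = 0) \<and>
     (\<forall>x\<ge>0. W x = W (-x) \<and> W x \<ge> 0 \<and> deriv W x = - deriv W (-x) \<and> deriv W x \<le> 0)"
    using Ds(3,4) by (simp only:)
next
  assume H: "smooth W \<and> (\<exists>R. \<forall>x. R < \<bar>x\<bar> \<longrightarrow> W x = 0) \<and>
     (\<forall>x\<ge>0. W x = W (-x) \<and> W x \<ge> 0 \<and> deriv W x = - deriv W (-x) \<and> deriv W x \<le> 0)"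
  then have "\<And>k x. ((deriv ^^ k) W has_real_derivative (deriv ^^ (Suc k)) W x) (at x)"
    using smooth_DERIV[of W] by blast
  moreover have "(deriv ^^ 0) W = W" "(deriv ^^ 1) W = deriv W" by simp_all
  ultimately show "smooth_profile W"
    unfolding smooth_profile_def using H by (intro exI[where x="\<lambda>k. (deriv ^^ k) W"]) ((simp only:), blast)
qed

lemma smooth_profile_smooth: "smooth_profile W \<Longrightarrow> smooth W"
  unfolding smooth_profile_iff by blast

lemma smooth_profileE_support:
  assumes "smooth_profile W"
  obtains R where "0 \<le> R" "\<And>x. R < \<bar>x\<bar> \<Longrightarrow> W x = 0"
proof -
  obtain R where "\<And>x. R < \<bar>x\<bar> \<Longrightarrow> W x = 0"
    using assms unfolding smooth_profile_iff by blast
  then show ?thesis using that[of "max R 0"] by simp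
qed

lemma smooth_profile_even: "smooth_profile W \<Longrightarrow> W (-x) = W x"
proof -
  assume "smooth_profile W"
  then have H: "\<And>x. x \<ge> 0 \<Longrightarrow> W x = W (-x)" unfolding smooth_profile_iff by blast
  show ?thesis
  proof (cases "x \<ge> 0")
    case True then show ?thesis using H[of x] by simp
  next
    case False then show ?thesis using H[of "-x"] by simp
  qed
qed

lemma smooth_profile_nonneg: "smooth_profile W \<Longrightarrow> W x \<ge> 0"
proof -
  assume W: "smooth_profile W"
  then have H: "\<And>x. x \<ge> 0 \<Longrightarrow> W x \<ge> 0" unfolding smooth_profile_iff by blast
  show ?thesis
  proof (cases "x \<ge> 0")
    case True then show ?thesis using H[of x] by simp
  next
    case False then show ?thesis using H[of "-x"] smooth_profile_even[OF W, of x] by simp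
  qed
qed

lemma smooth_profile_antimono:
  assumes "smooth_profile W" "0 \<le> u" "u \<le> v"
  shows "W v \<le> W u"
proof (rule DERIV_nonpos_imp_nonincreasing[OF assms(3)])
  fix x assume "u \<le> x" "x \<le> v"
  moreover have "\<forall>x\<ge>0. deriv W x \<le> 0" using assms(1) unfolding smooth_profile_iff by blast
  ultimately show "\<exists>y. DERIV W x :> y \<and> y \<le> 0"
    using assms(2) smooth_has_real_derivative[OF smooth_profile_smooth[OF assms(1)]]
    by (intro exI[of _ "deriv W x"]) auto
qed

lemma smooth_profile_zero: "smooth_profile (\<lambda>x. 0)"
  unfolding smooth_profile_iff using smooth_const[of 0] by simp

lemma smooth_profile_add:
  assumes "smooth_profile f" "smooth_profile g"
  shows "smooth_profile (\<lambda>x. f x + g x)"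
proof -
  obtain R1 where R1: "\<And>x. R1 < \<bar>x\<bar> \<Longrightarrow> f x = 0" and sf: "smooth f"
    and Hf: "\<forall>x\<ge>0. f x = f (-x) \<and> f x \<ge> 0 \<and> deriv f x = - deriv f (-x) \<and> deriv f x \<le> 0"
    using assms(1) unfolding smooth_profile_iff by blast
  obtain R2 where R2: "\<And>x. R2 < \<bar>x\<bar> \<Longrightarrow> g x = 0" and sg: "smooth g"
    and Hg: "\<forall>x\<ge>0. g x = g (-x) \<and> g x \<ge> 0 \<and> deriv g x = - deriv g (-x) \<and> deriv g x \<le> 0"
    using assms(2) unfolding smooth_profile_iff by blast
  have d: "deriv (\<lambda>x. f x + g x) x = deriv f x + deriv g x" for x
    by (intro DERIV_imp_deriv DERIV_add smooth_has_real_derivative sf sg)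
  show ?thesis
    unfolding smooth_profile_iff d
  proof (intro conjI allI impI)
    show "smooth (\<lambda>x. f x + g x)" using smooth_add[OF sf sg] .
    show "\<exists>R. \<forall>x. R < \<bar>x\<bar> \<longrightarrow> f x + g x = 0"
      by (rule exI[of _ "max R1 R2"]) (simp add: R1 R2)
    fix x :: real assume x: "x \<ge> 0"
    have "f x = f (-x)" "f x \<ge> 0" "deriv f x = - deriv f (-x)" "deriv f x \<le> 0"
      "g x = g (-x)" "g x \<ge> 0" "deriv g x = - deriv g (-x)" "deriv g x \<le> 0"
      using Hf Hg x by blast+
    then show "f x + g x = f (- x) + g (- x)" "0 \<le> f x + g x"
      "deriv f x + deriv g x = - (deriv f (- x) + deriv g (- x))" "deriv f x + deriv g x \<le> 0"
      by linarith+
  qed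
qed

lemma smooth_profile_cmult:
  assumes "smooth_profile f" "0 \<le> c"
  shows "smooth_profile (\<lambda>x. c * f x)"
proof -
  obtain R where R: "\<And>x. R < \<bar>x\<bar> \<Longrightarrow> f x = 0" and sf: "smooth f"
    and Hf: "\<forall>x\<ge>0. f x = f (-x) \<and> f x \<ge> 0 \<and> deriv f x = - deriv f (-x) \<and> deriv f x \<le> 0"
    using assms(1) unfolding smooth_profile_iff by blast
  have d: "deriv (\<lambda>x. c * f x) x = c * deriv f x" for x
    by (intro DERIV_imp_deriv DERIV_cmult smooth_has_real_derivative sf)
  show ?thesis
    unfolding smooth_profile_iff d
  proof (intro conjI allI impI)
    show "smooth (\<lambda>x. c * f x)" using smooth_cmult[OF sf] .
    show "\<exists>R. \<forall>x. R < \<bar>x\<bar> \<longrightarrow> c * f x = 0"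
      by (rule exI[of _ R]) (simp add: R)
    fix x :: real assume x: "x \<ge> 0"
    have "f x = f (-x)" "f x \<ge> 0" "deriv f x = - deriv f (-x)" "deriv f x \<le> 0"
      using Hf x by blast+
    then show "c * f x = c * f (- x)" "0 \<le> c * f x" "c * deriv f x = - (c * deriv f (- x))"
      "c * deriv f x \<le> 0"
      using assms(2) by (simp_all add: mult_nonneg_nonpos)
  qed
qed

lemma smooth_profile_polynomial_comp:
  assumes G: "smooth_profile G" and G_range: "\<And>x. G x \<in> {0..R}"
    and P: "real_polynomial_function P" "P 0 = 0"
    and P_mono: "\<And>r. r \<in> {0..R} \<Longrightarrow> 0 \<le> deriv P r"
  shows "smooth_profile (\<lambda>x. P (G x))"
proof -
  have smG: "smooth G" using smooth_profile_smooth[OF G] .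
  have HG: "\<forall>x\<ge>0. deriv G x = - deriv G (-x) \<and> deriv G x \<le> 0"
    using G unfolding smooth_profile_iff by blast
  obtain S where S: "\<And>x. S < \<bar>x\<bar> \<Longrightarrow> G x = 0" using smooth_profileE_support[OF G] by blast
  have dP: "(P has_real_derivative deriv P r) (at r)" for r
    using differentiable_at_real_polynomial_function[OF P(1)]
    by (simp add: DERIV_deriv_iff_real_differentiable)
  have P_nonneg: "0 \<le> P r" if "r \<in> {0..R}" for r
  proof -
    have "P 0 \<le> P r"
      by (rule DERIV_nonneg_imp_nondecreasing[of 0 r]) (use that dP P_mono in fastforce)+
    then show ?thesis using P(2) by simp
  qed
  have deriv_PG: "deriv (\<lambda>x. P (G x)) x = deriv P (G x) * deriv G x" for x
    by (intro DERIV_imp_deriv DERIV_chain2[OF dP] smooth_has_real_derivative smG)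
  have Geven: "G (-x) = G x" for x using smooth_profile_even[OF G] .
  show ?thesis
    unfolding smooth_profile_iff
  proof (intro conjI allI impI)
    show "smooth (\<lambda>x. P (G x))" by (rule smooth_polynomial_comp[OF P(1) smG])
    show "\<exists>R. \<forall>x. R < \<bar>x\<bar> \<longrightarrow> P (G x) = 0" by (intro exI[of _ S]) (simp add: S P(2))
    fix x :: real assume x: "0 \<le> x"
    show "P (G x) = P (G (- x))" using Geven[of x] by simp
    show "0 \<le> P (G x)" by (rule P_nonneg[OF G_range])
    have "deriv G x = - deriv G (-x)" using HG x by blast
    then show "deriv (\<lambda>x. P (G x)) x = - deriv (\<lambda>x. P (G x)) (- x)"
      unfolding deriv_PG Geven by simp
    have "deriv G x \<le> 0" using HG x by blast
    then show "deriv (\<lambda>x. P (G x)) x \<le> 0"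
      unfolding deriv_PG using P_mono[OF G_range[of x]] by (simp add: mult_nonneg_nonpos)
  qed
qed

section \<open>Square-integrable functions\<close>

definition square_integrable :: "(real \<Rightarrow> real) \<Rightarrow> bool" where
  "square_integrable f \<longleftrightarrow> f \<in> borel_measurable lborel \<and> integrable lborel (\<lambda>x. (f x)^2)"

lemma square_integrable_borel_measurable: "square_integrable f \<Longrightarrow> f \<in> borel_measurable borel"
  unfolding square_integrable_def by simp

lemma L2norm_power2: "(L2norm f)^2 = integral\<^sup>L lborel (\<lambda>x. (f x)^2)"
  unfolding L2norm_def by (simp add: integral_nonneg_AE)

lemma L2norm_nonneg: "0 \<le> L2norm f"
  unfolding L2norm_def by simp

lemma L2norm_cmult: "L2norm (\<lambda>x. c * f x) = \<bar>c\<bar> * L2norm f"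
  unfolding L2norm_def by (simp add: power_mult_distrib real_sqrt_mult)

lemma L2norm_uminus: "L2norm (\<lambda>x. - f x) = L2norm f"
  unfolding L2norm_def by simp

lemma L2norm_diff_commute: "L2norm (\<lambda>x. f x - g x) = L2norm (\<lambda>x. g x - f x)"
  unfolding L2norm_def by (simp add: power2_commute)

lemma square_integrable_integrable_mult:
  assumes "square_integrable f" "square_integrable g" shows "integrable lborel (\<lambda>x. f x * g x)"
proof (rule Bochner_Integration.integrable_bound)
  show "integrable lborel (\<lambda>x. (f x)^2 + (g x)^2)" using assms unfolding square_integrable_def by auto
  show "(\<lambda>x. f x * g x) \<in> borel_measurable lborel" using assms unfolding square_integrable_def by auto
  show "AE x in lborel. norm (f x * g x) \<le> norm ((f x)^2 + (g x)^2)"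
  proof (rule AE_I2)
    fix x
    have "0 \<le> (\<bar>f x\<bar> - \<bar>g x\<bar>)^2" by simp
    then have "2 * \<bar>f x * g x\<bar> \<le> (f x)^2 + (g x)^2"
      by (simp add: power2_eq_square algebra_simps abs_mult)
    then show "norm (f x * g x) \<le> norm ((f x)^2 + (g x)^2)" by simp
  qed
qed

lemma square_integrable_add:
  assumes "square_integrable f" "square_integrable g"
  shows "square_integrable (\<lambda>x. f x + g x)"
proof -
  have "integrable lborel (\<lambda>x. (f x)^2 + 2 * (f x * g x) + (g x)^2)"
    using assms square_integrable_integrable_mult[OF assms] unfolding square_integrable_def by auto
  then show ?thesis using assms unfolding square_integrable_def
    by (simp add: power2_sum algebra_simps borel_measurable_add)
qed

lemma square_integrable_cmult: "square_integrable f \<Longrightarrow> square_integrable (\<lambda>x. c * f x)"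
  unfolding square_integrable_def by (simp add: power_mult_distrib borel_measurable_times)

lemma square_integrable_diff:
  assumes "square_integrable f" "square_integrable g"
  shows "square_integrable (\<lambda>x. f x - g x)"
  using square_integrable_add[OF assms(1) square_integrable_cmult[OF assms(2), of "-1"]] by simp

lemma L2_Cauchy_Schwarz:
  assumes "square_integrable f" "square_integrable g"
  shows "integral\<^sup>L lborel (\<lambda>x. f x * g x) \<le> L2norm f * L2norm g"
proof -
  define a where "a = integral\<^sup>L lborel (\<lambda>x. (f x)^2)"
  define b where "b = integral\<^sup>L lborel (\<lambda>x. (g x)^2)"
  define p where "p = integral\<^sup>L lborel (\<lambda>x. f x * g x)"
  have ia: "integrable lborel (\<lambda>x. (f x)^2)" "integrable lborel (\<lambda>x. (g x)^2)"
    using assms unfolding square_integrable_def by auto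
  have ip: "integrable lborel (\<lambda>x. f x * g x)" using square_integrable_integrable_mult[OF assms] .
  have quadratic_nonneg: "0 \<le> t^2 * a - 2 * t * p + b" for t
  proof -
    have "0 \<le> integral\<^sup>L lborel (\<lambda>x. (t * f x - g x)^2)"
      by (simp add: integral_nonneg_AE)
    also have "(\<lambda>x. (t * f x - g x)^2) = (\<lambda>x. t^2 * (f x)^2 - (2 * t) * (f x * g x) + (g x)^2)"
      by (auto simp: power2_eq_square algebra_simps)
    also have "integral\<^sup>L lborel \<dots> = t^2 * a - 2 * t * p + b"
      using ia ip unfolding a_def b_def p_def by simp
    finally show ?thesis .
  qed
  have a0: "a \<ge> 0" unfolding a_def by (simp add: integral_nonneg_AE)
  have "p^2 \<le> a * b"
  proof (cases "a = 0")
    case True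
    have "p = 0"
    proof (rule ccontr)
      assume "p \<noteq> 0"
      then show False using quadratic_nonneg[of "(b+1)/(2*p)"] True by (simp add: field_simps)
    qed
    then show ?thesis using True by simp
  next
    case False
    then have "a > 0" using a0 by simp
    have "0 \<le> (p/a)^2 * a - 2 * (p/a) * p + b" by (rule quadratic_nonneg)
    also have "\<dots> = (a * b - p^2) / a" using \<open>a > 0\<close> by (simp add: field_simps power2_eq_square)
    finally show ?thesis using \<open>a > 0\<close> by (simp add: zero_le_divide_iff)
  qed
  then have "\<bar>p\<bar> \<le> sqrt (a * b)" using real_le_rsqrt[of "\<bar>p\<bar>" "a*b"] by simp
  then show ?thesis unfolding L2norm_def a_def b_def p_def by (simp add: real_sqrt_mult)
qed

lemma L2norm_triangle:
  assumes "square_integrable f" "square_integrable g"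
  shows "L2norm (\<lambda>x. f x + g x) \<le> L2norm f + L2norm g"
proof -
  have ia: "integrable lborel (\<lambda>x. (f x)^2)" "integrable lborel (\<lambda>x. (g x)^2)"
    using assms unfolding square_integrable_def by auto
  have ip: "integrable lborel (\<lambda>x. f x * g x)" using square_integrable_integrable_mult[OF assms] .
  have "(L2norm (\<lambda>x. f x + g x))^2 = integral\<^sup>L lborel (\<lambda>x. (f x)^2 + 2 * (f x * g x) + (g x)^2)"
    unfolding L2norm_power2 by (simp add: power2_sum algebra_simps)
  also have "\<dots> = (L2norm f)^2 + 2 * integral\<^sup>L lborel (\<lambda>x. f x * g x) + (L2norm g)^2"
    using ia ip unfolding L2norm_power2 by simp
  also have "\<dots> \<le> (L2norm f)^2 + 2 * (L2norm f * L2norm g) + (L2norm g)^2"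
    using L2_Cauchy_Schwarz[OF assms] by simp
  also have "\<dots> = (L2norm f + L2norm g)^2" by (simp add: power2_sum)
  finally show ?thesis
    using L2norm_nonneg[of f] L2norm_nonneg[of g] by (meson add_nonneg_nonneg power2_le_imp_le)
qed

lemma L2norm_triangle_diff:
  assumes "square_integrable f" "square_integrable g" "square_integrable h"
  shows "L2norm (\<lambda>x. f x - h x) \<le> L2norm (\<lambda>x. f x - g x) + L2norm (\<lambda>x. g x - h x)"
  using L2norm_triangle[OF square_integrable_diff[OF assms(1,2)] square_integrable_diff[OF assms(2,3)]]
  by simp

lemma square_integrable_dominated:
  assumes "f \<in> borel_measurable lborel" "square_integrable g" "AE x in lborel. \<bar>f x\<bar> \<le> \<bar>g x\<bar>"
  shows "square_integrable f" "L2norm f \<le> L2norm g"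
proof -
  have ig: "integrable lborel (\<lambda>x. (g x)^2)" using assms unfolding square_integrable_def by auto
  have le: "AE x in lborel. (f x)^2 \<le> (g x)^2"
    using assms(3) by eventually_elim (simp add: abs_le_square_iff)
  have if2: "integrable lborel (\<lambda>x. (f x)^2)"
    by (rule Bochner_Integration.integrable_bound[OF ig]) (use assms(1) le in auto)
  then show "square_integrable f" using assms unfolding square_integrable_def by auto
  show "L2norm f \<le> L2norm g"
    unfolding L2norm_def by (intro real_sqrt_le_mono integral_mono_AE if2 ig le)
qed

lemma L2norm_cong_AE:
  assumes "AE x in lborel. f x = g x" "f \<in> borel_measurable lborel" "g \<in> borel_measurable lborel"
  shows "L2norm f = L2norm g"
proof -
  have "integral\<^sup>L lborel (\<lambda>x. (f x)^2) = integral\<^sup>L lborel (\<lambda>x. (g x)^2)"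
    by (rule integral_cong_AE) (use assms in auto)
  then show ?thesis unfolding L2norm_def by simp
qed

lemma L2norm_eq_0_imp_AE:
  assumes "square_integrable f" "L2norm f = 0" shows "AE x in lborel. f x = 0"
proof -
  have "integral\<^sup>L lborel (\<lambda>x. (f x)^2) = 0" using assms(2) L2norm_power2[of f] by simp
  then have "AE x in lborel. (f x)^2 = 0"
    using assms(1) unfolding square_integrable_def by (subst (asm) integral_nonneg_eq_0_iff_AE) auto
  then show ?thesis by eventually_elim simp
qed

lemma square_integrable_bounded_support:
  assumes "f \<in> borel_measurable lborel" "\<And>x. \<bar>f x\<bar> \<le> B" "\<And>x. R < \<bar>x\<bar> \<Longrightarrow> f x = 0" "0 \<le> R"
  shows "square_integrable f" "L2norm f \<le> B * sqrt (2 * R)"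
proof -
  let ?b = "\<lambda>x. indicator {-R..R} x * B"
  have B0: "0 \<le> B" using assms(2)[of 0] by simp
  have b2: "(\<lambda>x. (?b x)^2) = (\<lambda>x. B^2 * indicator {-R..R} x)"
    by (auto split: split_indicator)
  have Lb: "square_integrable ?b"
    unfolding square_integrable_def b2 using assms(4) by (simp add: emeasure_lborel_Icc)
  have le: "\<bar>f x\<bar> \<le> \<bar>?b x\<bar>" for x
    using assms(2,3)[of x] B0 by (cases "R < \<bar>x\<bar>") (auto split: split_indicator)
  show "square_integrable f" using square_integrable_dominated[OF assms(1) Lb] le by auto
  have "L2norm f \<le> L2norm ?b" using square_integrable_dominated[OF assms(1) Lb] le by auto
  also have "\<dots> = B * sqrt (2 * R)"
    unfolding L2norm_def b2 using B0 assms(4) by (simp add: measure_lborel_Icc real_sqrt_mult)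
  finally show "L2norm f \<le> B * sqrt (2 * R)" .
qed

lemma square_integrable_sum:
  fixes f :: "nat \<Rightarrow> real \<Rightarrow> real"
  assumes "\<And>n. n < k \<Longrightarrow> square_integrable (f n)"
  shows "square_integrable (\<lambda>x. \<Sum>n<k. f n x) \<and> L2norm (\<lambda>x. \<Sum>n<k. f n x) \<le> (\<Sum>n<k. L2norm (f n))"
  using assms
proof (induction k)
  case 0
  show ?case unfolding square_integrable_def by (simp add: L2norm_def)
next
  case (Suc k)
  then have IH: "square_integrable (\<lambda>x. \<Sum>n<k. f n x)" "L2norm (\<lambda>x. \<Sum>n<k. f n x) \<le> (\<Sum>n<k. L2norm (f n))"
    and fk: "square_integrable (f k)" by auto
  then show ?case
    using square_integrable_add[OF IH(1) fk] L2norm_triangle[OF IH(1) fk] by simp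
qed

lemma square_integrableI_nn_integral_bound:
  assumes f: "f \<in> borel_measurable borel" and bound: "(\<integral>\<^sup>+x. ennreal ((f x)^2) \<partial>lborel) \<le> ennreal (C^2)"
    and C: "0 \<le> C"
  shows "square_integrable f" "L2norm f \<le> C"
proof -
  have "integrable lborel (\<lambda>x. (f x)^2)"
    by (rule integrableI_bounded) (use f bound in \<open>auto simp: le_less_trans\<close>)
  then show "square_integrable f" using f unfolding square_integrable_def by simp
  have "integral\<^sup>L lborel (\<lambda>x. (f x)^2) = enn2real (\<integral>\<^sup>+x. ennreal ((f x)^2) \<partial>lborel)"
    by (rule integral_eq_nn_integral) (use f in auto)
  also have "\<dots> \<le> C^2" using bound by (intro enn2real_leI) auto
  finally have "(L2norm f)^2 \<le> C^2" unfolding L2norm_power2 .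
  then show "L2norm f \<le> C" using C by (rule power2_le_imp_le)
qed

lemma square_integrable_pointwise_limit:
  assumes S: "\<And>k. square_integrable (S k)" and bound: "\<And>k. L2norm (S k) \<le> C"
    and lim: "\<And>x. (\<lambda>k. S k x) \<longlonglongrightarrow> f x"
  shows "square_integrable f" "L2norm f \<le> C"
proof -
  have C: "0 \<le> C" using bound[of 0] L2norm_nonneg[of "S 0"] by linarith
  have [measurable]: "S k \<in> borel_measurable borel" for k
    using square_integrable_borel_measurable[OF S] .
  have f: "f \<in> borel_measurable borel"
    by (rule borel_measurable_LIMSEQ_real[OF lim]) simp
  \<comment> \<open>Fatou's lemma\<close>
  have "(\<integral>\<^sup>+x. ennreal ((f x)^2) \<partial>lborel) = (\<integral>\<^sup>+x. liminf (\<lambda>k. ennreal ((S k x)^2)) \<partial>lborel)"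
  proof (rule nn_integral_cong)
    fix x
    have "(\<lambda>k. ennreal ((S k x)^2)) \<longlonglongrightarrow> ennreal ((f x)^2)"
      by (intro tendsto_ennrealI tendsto_power lim)
    then have "liminf (\<lambda>k. ennreal ((S k x)^2)) = ennreal ((f x)^2)"
      by (rule lim_imp_Liminf[rotated]) simp
    then show "ennreal ((f x)^2) = liminf (\<lambda>k. ennreal ((S k x)^2))" by simp
  qed
  also have "\<dots> \<le> liminf (\<lambda>k. \<integral>\<^sup>+x. ennreal ((S k x)^2) \<partial>lborel)"
    by (rule nn_integral_liminf) measurable
  also have "\<dots> \<le> limsup (\<lambda>k. \<integral>\<^sup>+x. ennreal ((S k x)^2) \<partial>lborel)"
    by (rule Liminf_le_Limsup) simp
  also have "\<dots> \<le> ennreal (C^2)"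
  proof (rule Limsup_bounded, rule always_eventually, rule allI)
    fix k
    have "(\<integral>\<^sup>+x. ennreal ((S k x)^2) \<partial>lborel) = ennreal ((L2norm (S k))^2)"
      unfolding L2norm_power2 using S[of k] unfolding square_integrable_def
      by (intro nn_integral_eq_integral) auto
    then show "(\<integral>\<^sup>+x. ennreal ((S k x)^2) \<partial>lborel) \<le> ennreal (C^2)"
      using bound[of k] L2norm_nonneg[of "S k"] by (simp add: ennreal_leI power_mono)
  qed
  finally show "square_integrable f" "L2norm f \<le> C"
    using square_integrableI_nn_integral_bound[OF f _ C] by blast+
qed

lemma square_integrable_suminf:
  fixes f :: "nat \<Rightarrow> real \<Rightarrow> real"
  assumes f: "\<And>n. square_integrable (f n)" and c: "\<And>n. L2norm (f n) \<le> c n" and sc: "summable c"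
    and sf: "\<And>x. summable (\<lambda>n. f n x)"
  shows "square_integrable (\<lambda>x. \<Sum>n. f n x)" "L2norm (\<lambda>x. \<Sum>n. f n x) \<le> (\<Sum>n. c n)"
proof -
  have partial_sums: "square_integrable (\<lambda>x. \<Sum>n<k. f n x)"
    "L2norm (\<lambda>x. \<Sum>n<k. f n x) \<le> (\<Sum>n<k. L2norm (f n))" for k
    using square_integrable_sum[of k f] f by auto
  have bound: "L2norm (\<lambda>x. \<Sum>n<k. f n x) \<le> (\<Sum>n. c n)" for k
  proof -
    have c0: "0 \<le> c n" for n using c[of n] L2norm_nonneg[of "f n"] by linarith
    have "(\<Sum>n<k. L2norm (f n)) \<le> (\<Sum>n<k. c n)" by (intro sum_mono c)
    also have "\<dots> \<le> (\<Sum>n. c n)" by (rule sum_le_suminf[OF sc]) (auto simp: c0)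
    finally show ?thesis using partial_sums(2)[of k] by linarith
  qed
  note limit = square_integrable_pointwise_limit[OF partial_sums(1) bound summable_LIMSEQ[OF sf]]
  show "square_integrable (\<lambda>x. \<Sum>n. f n x)" by (rule limit(1))
  show "L2norm (\<lambda>x. \<Sum>n. f n x) \<le> (\<Sum>n. c n)" by (rule limit(2))
qed

lemma square_integrable_shift:
  assumes "square_integrable f"
  shows "square_integrable (\<lambda>s. f (t + s))" "L2norm (\<lambda>s. f (t + s)) = L2norm f"
proof -
  have [measurable]: "f \<in> borel_measurable borel" using square_integrable_borel_measurable[OF assms] .
  have "integrable lborel (\<lambda>x. (f x)^2)" using assms unfolding square_integrable_def by simp
  then have "integrable lborel (\<lambda>x. (f (t + 1 * x))^2)"
    by (rule lborel_integrable_real_affine) simp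
  then show "square_integrable (\<lambda>s. f (t + s))" unfolding square_integrable_def by simp
  show "L2norm (\<lambda>s. f (t + s)) = L2norm f"
    unfolding L2norm_def using lborel_integral_real_affine[of 1 "\<lambda>x. (f x)^2" t] by simp
qed

lemma square_integrable_set_integrable:
  assumes "square_integrable g" shows "set_integrable lborel {a..b} g"
  unfolding set_integrable_def
proof (rule Bochner_Integration.integrable_bound)
  show "integrable lborel (\<lambda>x. indicator {a..b} x + (g x)^2)"
    using assms emeasure_compact_finite[of "{a..b}"] unfolding square_integrable_def
    by (intro Bochner_Integration.integrable_add integrable_real_indicator) auto
  show "(\<lambda>x. indicat_real {a..b} x *\<^sub>R g x) \<in> borel_measurable lborel"
    using assms unfolding square_integrable_def by auto
  have "\<bar>y\<bar> \<le> 1 + y^2" for y :: real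
  proof -
    have "0 \<le> (\<bar>y\<bar> - 1/2)^2" by simp
    then show ?thesis by (simp add: power2_eq_square algebra_simps)
  qed
  then show "AE x in lborel. norm (indicat_real {a..b} x *\<^sub>R g x) \<le> norm (indicator {a..b} x + (g x)^2)"
    by (auto split: split_indicator)
qed

lemma set_integral_Icc_power2_le:
  assumes "square_integrable g" "a \<le> b"
  shows "(set_lebesgue_integral lborel {a..b} g)^2 \<le> (b - a) * integral\<^sup>L lborel (\<lambda>x. indicator {a..b} x * (g x)^2)"
proof -
  define u where "u = (\<lambda>x. indicator {a..b} x :: real)"
  define v where "v = (\<lambda>x. indicator {a..b} x * g x)"
  have u2: "(\<lambda>x. (u x)^2) = u" unfolding u_def by (auto split: split_indicator)
  have v2: "(\<lambda>x. (v x)^2) = (\<lambda>x. indicator {a..b} x * (g x)^2)" unfolding v_def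
    by (auto split: split_indicator)
  have Lu: "square_integrable u" unfolding square_integrable_def u2 unfolding u_def
    using assms(2) by (auto simp: emeasure_lborel_Icc)
  have Lv: "square_integrable v"
    by (rule square_integrable_dominated(1)[OF _ assms(1)])
       (use assms(1) in \<open>auto simp: v_def square_integrable_def split: split_indicator\<close>)
  define p where "p = set_lebesgue_integral lborel {a..b} g"
  have p: "p = integral\<^sup>L lborel (\<lambda>x. u x * v x)"
    unfolding p_def set_lebesgue_integral_def u_def v_def
    by (intro Bochner_Integration.integral_cong) (auto split: split_indicator)
  have "p \<le> L2norm u * L2norm v" unfolding p using L2_Cauchy_Schwarz[OF Lu Lv] .
  moreover have "-p \<le> L2norm u * L2norm (\<lambda>x. - v x)"
    unfolding p using L2_Cauchy_Schwarz[OF Lu square_integrable_cmult[OF Lv, of "-1"]] by simp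
  ultimately have "\<bar>p\<bar> \<le> L2norm u * L2norm v" by (simp add: L2norm_uminus)
  then have "p^2 \<le> (L2norm u * L2norm v)^2"
    by (metis abs_ge_zero order.trans power2_abs power_mono)
  also have "\<dots> = (b - a) * integral\<^sup>L lborel (\<lambda>x. indicator {a..b} x * (g x)^2)"
    unfolding L2norm_def u2 v2 power_mult_distrib using assms(2)
    by (simp add: u_def integral_nonneg_AE)
  finally show ?thesis unfolding p_def .
qed

section \<open>The cone\<close>

lemma cone_square_integrable: "W \<in> cone \<Longrightarrow> square_integrable W"
  unfolding cone_def square_integrable_def by auto

lemma smooth_profile_square_integrable:
  assumes "smooth_profile W" shows "square_integrable W"
proof -
  obtain R where R: "0 \<le> R" "\<And>x. R < \<bar>x\<bar> \<Longrightarrow> W x = 0"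
    using smooth_profileE_support[OF assms] by blast
  have sm: "smooth W" using smooth_profile_smooth[OF assms] .
  obtain B where B: "\<And>x. x \<in> {-R..R} \<Longrightarrow> \<bar>W x\<bar> \<le> B"
    using compact_imp_bounded[OF compact_continuous_image[OF smooth_continuous_on[OF sm] compact_Icc]]
    unfolding bounded_iff by (metis image_eqI real_norm_def)
  have "\<bar>W x\<bar> \<le> max B 0" for x
    using B[of x] R(2)[of x] by (cases "R < \<bar>x\<bar>") (auto simp: abs_if split: if_splits)
  then show ?thesis
    using square_integrable_bounded_support(1)[of W "max B 0" R] R smooth_borel_measurable[OF sm] by simp
qed

lemma smooth_profile_in_cone: "smooth_profile f \<Longrightarrow> f \<in> cone"
  unfolding cone_def using smooth_profile_square_integrable[of f]
  by (auto simp: square_integrable_def L2norm_def intro!: exI[of _ "\<lambda>n. f"])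

lemma coneE_approx:
  assumes "g \<in> cone" "e > 0"
  obtains F where "smooth_profile F" "L2norm (\<lambda>x. F x - g x) < e"
proof -
  obtain F where F: "\<And>n. smooth_profile (F n)" "(\<lambda>n. L2norm (\<lambda>x. F n x - g x)) \<longlonglongrightarrow> 0"
    using assms unfolding cone_def by blast
  from order_tendstoD(2)[OF F(2) assms(2)] obtain n where "L2norm (\<lambda>x. F n x - g x) < e"
    by (meson eventually_sequentially order.refl)
  then show ?thesis using that F(1) by blast
qed

lemma coneE_approx_norm_less:
  assumes W: "W \<in> cone" and "L2norm W < r" "0 < e"
  obtains F where "smooth_profile F" "L2norm (\<lambda>x. F x - W x) < e" "L2norm F < r"
proof -
  obtain F where F: "smooth_profile F" "L2norm (\<lambda>x. F x - W x) < min e (r - L2norm W)"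
    using coneE_approx[OF W, of "min e (r - L2norm W)"] assms(2,3) by auto
  have LW: "square_integrable W" using cone_square_integrable[OF W] .
  have "L2norm (\<lambda>x. W x + (F x - W x)) \<le> L2norm W + L2norm (\<lambda>x. F x - W x)"
    by (rule L2norm_triangle[OF LW square_integrable_diff[OF smooth_profile_square_integrable[OF F(1)] LW]])
  then have "L2norm F < r" using F(2) by simp
  moreover have "L2norm (\<lambda>x. F x - W x) < e" using F(2) by simp
  ultimately show ?thesis using that F(1) by blast
qed

lemma coneI_approx:
  assumes "square_integrable f" "\<And>e. e > 0 \<Longrightarrow> \<exists>g\<in>cone. L2norm (\<lambda>x. g x - f x) < e"
  shows "f \<in> cone"
proof -
  have "\<exists>F. smooth_profile F \<and> L2norm (\<lambda>x. F x - f x) < 1 / (real n + 1)" for n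
  proof -
    define e where "e = 1 / (real n + 1)"
    have e: "e > 0" unfolding e_def by simp
    obtain g where g: "g \<in> cone" "L2norm (\<lambda>x. g x - f x) < e/2" using assms(2)[of "e/2"] e by auto
    obtain F where F: "smooth_profile F" "L2norm (\<lambda>x. F x - g x) < e/2"
      using coneE_approx[OF g(1), of "e/2"] e by auto
    have "L2norm (\<lambda>x. F x - f x) \<le> L2norm (\<lambda>x. F x - g x) + L2norm (\<lambda>x. g x - f x)"
      by (rule L2norm_triangle_diff)
         (use F g assms smooth_profile_square_integrable cone_square_integrable in auto)
    then have "L2norm (\<lambda>x. F x - f x) < e" using F g by simp
    then show ?thesis using F(1) unfolding e_def by blast
  qed
  then obtain F where F: "\<And>n. smooth_profile (F n)" "\<And>n. L2norm (\<lambda>x. F n x - f x) < 1 / (real n + 1)"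
    by metis
  have "(\<lambda>n. L2norm (\<lambda>x. F n x - f x)) \<longlonglongrightarrow> 0"
  proof (rule tendsto_sandwich[where f="\<lambda>n. 0" and h="\<lambda>n. 1 / (real n + 1)"])
    show "\<forall>\<^sub>F n in sequentially. 0 \<le> L2norm (\<lambda>x. F n x - f x)" by (simp add: L2norm_nonneg)
    show "\<forall>\<^sub>F n in sequentially. L2norm (\<lambda>x. F n x - f x) \<le> 1 / (real n + 1)"
      using F(2) by (simp add: less_imp_le)
    show "(\<lambda>n. 1 / (real n + 1)) \<longlonglongrightarrow> 0"
      using LIMSEQ_inverse_real_of_nat by (simp add: inverse_eq_divide add.commute)
  qed simp
  then show ?thesis using assms(1) F(1) unfolding cone_def square_integrable_def by blast
qed

lemma cone_add:
  assumes "f \<in> cone" "g \<in> cone"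
  shows "(\<lambda>x. f x + g x) \<in> cone"
proof (rule coneI_approx)
  show "square_integrable (\<lambda>x. f x + g x)"
    using assms cone_square_integrable square_integrable_add by blast
  fix e :: real assume e: "e > 0"
  obtain F where F: "smooth_profile F" "L2norm (\<lambda>x. F x - f x) < e/2"
    using coneE_approx[OF assms(1), of "e/2"] e by auto
  obtain G where G: "smooth_profile G" "L2norm (\<lambda>x. G x - g x) < e/2"
    using coneE_approx[OF assms(2), of "e/2"] e by auto
  have "L2norm (\<lambda>x. (F x + G x) - (f x + g x)) = L2norm (\<lambda>x. (F x - f x) + (G x - g x))"
    by (simp add: algebra_simps)
  also have "\<dots> \<le> L2norm (\<lambda>x. F x - f x) + L2norm (\<lambda>x. G x - g x)"
    by (rule L2norm_triangle)
       (use F G assms smooth_profile_square_integrable cone_square_integrable square_integrable_diff in auto)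
  finally have "L2norm (\<lambda>x. (F x + G x) - (f x + g x)) < e" using F G by simp
  then show "\<exists>h\<in>cone. L2norm (\<lambda>x. h x - (f x + g x)) < e"
    using smooth_profile_in_cone[OF smooth_profile_add[OF F(1) G(1)]]
    by (intro bexI[where x="\<lambda>x. F x + G x"]) auto
qed

lemma cone_cmult:
  assumes "f \<in> cone" "0 \<le> c"
  shows "(\<lambda>x. c * f x) \<in> cone"
proof (rule coneI_approx)
  show "square_integrable (\<lambda>x. c * f x)" using assms cone_square_integrable square_integrable_cmult by blast
  fix e :: real assume e: "e > 0"
  obtain F where F: "smooth_profile F" "L2norm (\<lambda>x. F x - f x) < e/(c+1)"
    using coneE_approx[OF assms(1), of "e/(c+1)"] e assms(2) by auto
  have "L2norm (\<lambda>x. c * F x - c * f x) = c * L2norm (\<lambda>x. F x - f x)"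
    using L2norm_cmult[of c "\<lambda>x. F x - f x"] assms(2) by (simp add: algebra_simps)
  also have "\<dots> \<le> c * (e/(c+1))" using mult_left_mono[OF less_imp_le[OF F(2)] assms(2)] .
  also have "\<dots> < e" using e assms(2) by (simp add: field_simps)
  finally show "\<exists>h\<in>cone. L2norm (\<lambda>x. h x - c * f x) < e"
    using smooth_profile_in_cone[OF smooth_profile_cmult[OF F(1) assms(2)]]
    by (intro bexI[where x="\<lambda>x. c * F x"]) auto
qed

lemma cone_sum:
  assumes "\<And>i. i \<in> S \<Longrightarrow> f i \<in> cone"
  shows "(\<lambda>x. \<Sum>i\<in>S. f i x) \<in> cone"
  using assms
proof (induction S rule: infinite_finite_induct)
  case (infinite A) then show ?case by (simp add: smooth_profile_in_cone[OF smooth_profile_zero])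
next
  case empty then show ?case by (simp add: smooth_profile_in_cone[OF smooth_profile_zero])
next
  case (insert x F) then show ?case by (auto intro!: cone_add)
qed

lemma cone_suminf:
  assumes f: "\<And>n. f n \<in> cone" and c: "\<And>n. L2norm (f n) \<le> c n" and sc: "summable c"
    and sf: "\<And>x. summable (\<lambda>n. f n x)"
  shows "(\<lambda>x. \<Sum>n. f n x) \<in> cone"
proof (rule coneI_approx)
  have Lf: "square_integrable (f n)" for n using cone_square_integrable[OF f] .
  show "square_integrable (\<lambda>x. \<Sum>n. f n x)" by (rule square_integrable_suminf(1)[OF Lf c sc sf])
  fix e :: real assume e: "e > 0"
  obtain M where M: "norm (\<Sum>i. c (i + M)) < e"
    using suminf_exist_split[OF e sc] by blast
  have "(\<Sum>n. f n x) = (\<Sum>i. f (i + M) x) + (\<Sum>i<M. f i x)" for x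
    by (rule suminf_split_initial_segment[OF sf])
  then have "(\<lambda>x. (\<Sum>n. f n x) - (\<Sum>n<M. f n x)) = (\<lambda>x. \<Sum>i. f (i + M) x)"
    by auto
  then have "L2norm (\<lambda>x. (\<Sum>n<M. f n x) - (\<Sum>n. f n x)) = L2norm (\<lambda>x. \<Sum>i. f (i + M) x)"
    by (metis L2norm_diff_commute)
  also have "\<dots> \<le> (\<Sum>i. c (i + M))"
    by (rule square_integrable_suminf(2)) (use Lf c summable_ignore_initial_segment[OF sc] summable_ignore_initial_segment[OF sf] in auto)
  also have "\<dots> < e" using M by simp
  moreover have "(\<lambda>x. \<Sum>n<M. f n x) \<in> cone" by (rule cone_sum) (rule f)
  ultimately show "\<exists>g\<in>cone. L2norm (\<lambda>x. g x - (\<Sum>n. f n x)) < e"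
    by (intro bexI[of _ "\<lambda>x. \<Sum>n<M. f n x"]) auto
qed

lemma cone_nonneg_AE:
  assumes "f \<in> cone" shows "AE x in lborel. f x \<ge> 0"
proof -
  define f_neg where "f_neg = (\<lambda>x. min (f x) 0)"
  have L: "square_integrable f" using cone_square_integrable[OF assms] .
  have f_neg_meas: "f_neg \<in> borel_measurable lborel" using L unfolding f_neg_def square_integrable_def by auto
  have "L2norm f_neg \<le> e" if e: "e > 0" for e
  proof -
    obtain F where F: "smooth_profile F" "L2norm (\<lambda>x. F x - f x) < e"
      using coneE_approx[OF assms e] by blast
    have "\<bar>f_neg x\<bar> \<le> \<bar>F x - f x\<bar>" for x
      using smooth_profile_nonneg[OF F(1), of x] unfolding f_neg_def by auto
    then have "L2norm f_neg \<le> L2norm (\<lambda>x. F x - f x)"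
      using square_integrable_dominated(2)[OF f_neg_meas
          square_integrable_diff[OF smooth_profile_square_integrable[OF F(1)] L]] by auto
    then show ?thesis using F(2) by simp
  qed
  then have "L2norm f_neg = 0" using L2norm_nonneg[of f_neg] by (meson dense_ge order_antisym)
  moreover have "square_integrable f_neg"
    using square_integrable_dominated(1)[OF f_neg_meas L] unfolding f_neg_def by auto
  ultimately have "AE x in lborel. f_neg x = 0" using L2norm_eq_0_imp_AE by blast
  then show ?thesis unfolding f_neg_def by eventually_elim (simp add: min_def split: if_splits)
qed

lemma cone_rescale_in_coneK:
  assumes "f \<in> cone" "0 < L2norm f" "W \<in> coneK K"
  shows "(\<lambda>x. L2norm W / L2norm f * f x) \<in> coneK K"
proof -
  have c0: "0 \<le> L2norm W / L2norm f" using assms(2) L2norm_nonneg[of W] by simp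
  have "L2norm (\<lambda>x. L2norm W / L2norm f * f x) = \<bar>L2norm W / L2norm f\<bar> * L2norm f"
    by (rule L2norm_cmult)
  also have "\<dots> = L2norm W" using c0 assms(2) L2norm_nonneg[of W] by simp
  finally have "L2norm (\<lambda>x. L2norm W / L2norm f * f x) = L2norm W" .
  then show ?thesis
    using cone_cmult[OF assms(1) c0] assms(3) unfolding coneK_def by simp
qed

section \<open>The averaging operator\<close>

lemma Aop_measurable:
  assumes [measurable]: "f \<in> borel_measurable borel"
  shows "Aop m f \<in> borel_measurable borel"
proof -
  have "(\<lambda>(\<xi>, s). indicator {- real m / 2 .. real m / 2} s *\<^sub>R f (\<xi> + s) :: real)
      \<in> borel_measurable (lborel \<Otimes>\<^sub>M lborel)"
    by measurable
  from lborel.borel_measurable_lebesgue_integral[OF this] show ?thesis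
    unfolding Aop_def set_lebesgue_integral_def by simp
qed

lemma nn_integral_interval_translates:
  fixes g :: "real \<Rightarrow> real"
  assumes [measurable]: "g \<in> borel_measurable borel" and ab: "a \<le> b"
  shows "(\<integral>\<^sup>+\<xi>. (\<integral>\<^sup>+s. ennreal (indicator {a..b} s * g (\<xi> + s)) \<partial>lborel) \<partial>lborel)
       = ennreal (b - a) * (\<integral>\<^sup>+x. ennreal (g x) \<partial>lborel)"
proof -
  have m: "(\<lambda>(\<xi>, s). ennreal (indicator {a..b} s * g (\<xi> + s))) \<in> borel_measurable (lborel \<Otimes>\<^sub>M lborel)"
    by measurable
  have "(\<integral>\<^sup>+\<xi>. (\<integral>\<^sup>+s. ennreal (indicator {a..b} s * g (\<xi> + s)) \<partial>lborel) \<partial>lborel)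
      = (\<integral>\<^sup>+s. (\<integral>\<^sup>+\<xi>. ennreal (indicator {a..b} s * g (\<xi> + s)) \<partial>lborel) \<partial>lborel)"
    using lborel_pair.Fubini'[OF m] by simp
  also have "\<dots> = (\<integral>\<^sup>+s. (\<integral>\<^sup>+x. ennreal (g x) \<partial>lborel) * indicator {a..b} s \<partial>lborel)"
  proof (rule nn_integral_cong)
    fix s :: real
    have "(\<lambda>\<xi>. ennreal (indicator {a..b} s * g (\<xi> + s))) = (\<lambda>\<xi>. indicator {a..b} s * ennreal (g (s + 1 * \<xi>)))"
      by (auto split: split_indicator simp: add.commute)
    then have "(\<integral>\<^sup>+\<xi>. ennreal (indicator {a..b} s * g (\<xi> + s)) \<partial>lborel)
        = indicator {a..b} s * (\<integral>\<^sup>+\<xi>. ennreal (g (s + 1 * \<xi>)) \<partial>lborel)"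
      by (simp add: nn_integral_cmult)
    also have "(\<integral>\<^sup>+\<xi>. ennreal (g (s + 1 * \<xi>)) \<partial>lborel) = (\<integral>\<^sup>+x. ennreal (g x) \<partial>lborel)"
      using nn_integral_real_affine[of "\<lambda>x. ennreal (g x)" 1 s] by simp
    finally show "(\<integral>\<^sup>+\<xi>. ennreal (indicator {a..b} s * g (\<xi> + s)) \<partial>lborel)
        = (\<integral>\<^sup>+x. ennreal (g x) \<partial>lborel) * indicator {a..b} s"
      by (simp add: mult.commute)
  qed
  also have "\<dots> = (\<integral>\<^sup>+x. ennreal (g x) \<partial>lborel) * emeasure lborel {a..b}"
    by (rule nn_integral_cmult_indicator) simp
  also have "\<dots> = ennreal (b - a) * (\<integral>\<^sup>+x. ennreal (g x) \<partial>lborel)"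
    using ab by (simp add: mult.commute)
  finally show ?thesis .
qed

lemma Aop_power2_le:
  assumes "square_integrable f"
  shows "(Aop m f \<xi>)^2 \<le> real m * integral\<^sup>L lborel (\<lambda>s. indicator {- real m / 2 .. real m / 2} s * (f (\<xi> + s))^2)"
  using set_integral_Icc_power2_le[OF square_integrable_shift(1)[OF assms], of "- real m / 2" "real m / 2" \<xi>]
  unfolding Aop_def by simp

lemma abs_Aop_le_L2norm:
  assumes "square_integrable f"
  shows "\<bar>Aop m f \<xi>\<bar> \<le> sqrt (real m) * L2norm f"
proof -
  let ?g = "\<lambda>s. f (\<xi> + s)"
  have Lg: "square_integrable ?g" using square_integrable_shift(1)[OF assms] .
  have "(Aop m f \<xi>)^2 \<le> real m * integral\<^sup>L lborel (\<lambda>s. indicator {- real m / 2 .. real m / 2} s * (?g s)^2)"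
    by (rule Aop_power2_le[OF assms])
  also have "\<dots> \<le> real m * integral\<^sup>L lborel (\<lambda>s. (?g s)^2)"
  proof (intro mult_left_mono integral_mono)
    show "integrable lborel (\<lambda>s. (?g s)^2)" using Lg unfolding square_integrable_def by simp
    then show "integrable lborel (\<lambda>s. indicator {- real m / 2 .. real m / 2} s * (?g s)^2)"
      using integrable_real_mult_indicator[of "{- real m / 2 .. real m / 2}" lborel "\<lambda>x. (?g x)^2"]
      by (simp add: mult.commute)
  qed (auto split: split_indicator)
  also have "\<dots> = (sqrt (real m) * L2norm f)^2"
    using square_integrable_shift(2)[OF assms, of \<xi>] L2norm_power2[of ?g] by (simp add: power_mult_distrib)
  finally show ?thesis
    by (rule power2_le_imp_le[of "\<bar>Aop m f \<xi>\<bar>", simplified]) (simp add: L2norm_nonneg)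
qed

lemma ennreal_Aop_power2_le:
  assumes "square_integrable f"
  shows "ennreal ((Aop m f \<xi>)^2)
    \<le> ennreal (real m) * (\<integral>\<^sup>+s. ennreal (indicator {- real m / 2 .. real m / 2} s * (f (\<xi> + s))^2) \<partial>lborel)"
proof -
  let ?I = "{- real m / 2 .. real m / 2}"
  have "integrable lborel (\<lambda>s. indicator ?I s * (f (\<xi> + s))^2)"
    using integrable_real_mult_indicator[of ?I lborel "\<lambda>s. (f (\<xi> + s))^2"] square_integrable_shift(1)[OF assms]
    unfolding square_integrable_def by (simp add: mult.commute)
  then have "ennreal (integral\<^sup>L lborel (\<lambda>s. indicator ?I s * (f (\<xi> + s))^2))
      = (\<integral>\<^sup>+s. ennreal (indicator ?I s * (f (\<xi> + s))^2) \<partial>lborel)"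
    by (intro nn_integral_eq_integral[symmetric]) auto
  moreover have "ennreal ((Aop m f \<xi>)^2) \<le> ennreal (real m * integral\<^sup>L lborel (\<lambda>s. indicator ?I s * (f (\<xi> + s))^2))"
    by (rule ennreal_leI[OF Aop_power2_le[OF assms]])
  ultimately show ?thesis by (simp add: ennreal_mult integral_nonneg_AE)
qed

lemma square_integrable_Aop:
  assumes "square_integrable f"
  shows "square_integrable (Aop m f)" "L2norm (Aop m f) \<le> real m * L2norm f"
proof -
  have f_meas [measurable]: "f \<in> borel_measurable borel" using square_integrable_borel_measurable[OF assms] .
  let ?I = "{- real m / 2 .. real m / 2}"
  have "(\<integral>\<^sup>+\<xi>. ennreal ((Aop m f \<xi>)^2) \<partial>lborel)
      \<le> (\<integral>\<^sup>+\<xi>. ennreal (real m) * (\<integral>\<^sup>+s. ennreal (indicator ?I s * (f (\<xi> + s))^2) \<partial>lborel) \<partial>lborel)"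
    by (rule nn_integral_mono) (rule ennreal_Aop_power2_le[OF assms])
  also have "\<dots> = ennreal (real m) * (\<integral>\<^sup>+\<xi>. (\<integral>\<^sup>+s. ennreal (indicator ?I s * (f (\<xi> + s))^2) \<partial>lborel) \<partial>lborel)"
    by (rule nn_integral_cmult) measurable
  also have "(\<integral>\<^sup>+\<xi>. (\<integral>\<^sup>+s. ennreal (indicator ?I s * (f (\<xi> + s))^2) \<partial>lborel) \<partial>lborel)
      = ennreal (real m) * (\<integral>\<^sup>+x. ennreal ((f x)^2) \<partial>lborel)"
    using nn_integral_interval_translates[of "\<lambda>x. (f x)^2" "- real m / 2" "real m / 2"] by simp
  also have "(\<integral>\<^sup>+x. ennreal ((f x)^2) \<partial>lborel) = ennreal (integral\<^sup>L lborel (\<lambda>x. (f x)^2))"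
    by (rule nn_integral_eq_integral) (use assms in \<open>auto simp: square_integrable_def\<close>)
  finally have "(\<integral>\<^sup>+\<xi>. ennreal ((Aop m f \<xi>)^2) \<partial>lborel) \<le> ennreal ((real m * L2norm f)^2)"
    unfolding power_mult_distrib L2norm_power2
    by (simp add: ennreal_mult integral_nonneg_AE power2_eq_square mult.assoc)
  then show "square_integrable (Aop m f)" "L2norm (Aop m f) \<le> real m * L2norm f"
    using square_integrableI_nn_integral_bound[OF Aop_measurable[OF f_meas]] by (simp_all add: L2norm_nonneg)
qed

lemma Aop_diff:
  assumes "square_integrable f" "square_integrable g"
  shows "Aop m (\<lambda>x. f x - g x) \<xi> = Aop m f \<xi> - Aop m g \<xi>"
  unfolding Aop_def
  by (rule set_integral_diff(2)) (use square_integrable_set_integrable square_integrable_shift(1) assms in auto)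

lemma L2norm_Aop_diff_le:
  assumes "square_integrable f" "square_integrable g"
  shows "L2norm (\<lambda>x. Aop m f x - Aop m g x) \<le> real m * L2norm (\<lambda>x. f x - g x)"
proof -
  have "(\<lambda>x. Aop m f x - Aop m g x) = Aop m (\<lambda>x. f x - g x)"
    using Aop_diff[OF assms] by auto
  then show ?thesis using square_integrable_Aop(2)[OF square_integrable_diff[OF assms]] by simp
qed

lemma Aop_nonneg: "(\<And>x. 0 \<le> f x) \<Longrightarrow> 0 \<le> Aop m f \<xi>"
  unfolding Aop_def set_lebesgue_integral_def by (rule integral_nonneg_AE) auto

lemma abs_Aop_le:
  assumes "\<And>x. \<bar>f x\<bar> \<le> B" "f \<in> borel_measurable borel"
  shows "\<bar>Aop m f \<xi>\<bar> \<le> real m * B"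
proof -
  let ?I = "{- real m / 2 .. real m / 2}"
  have ib: "integrable lborel (\<lambda>s. indicator ?I s * B)"
    using emeasure_compact_finite[of ?I] by (intro integrable_mult_left integrable_real_indicator) auto
  have bd: "\<bar>indicator ?I s * f (\<xi> + s)\<bar> \<le> indicator ?I s * B" for s
    using assms(1)[of "\<xi> + s"] by (auto split: split_indicator)
  have "(\<lambda>s. indicator ?I s * f (\<xi> + s)) \<in> borel_measurable lborel"
    using assms(2) by measurable
  then have "integrable lborel (\<lambda>s. indicator ?I s * f (\<xi> + s))"
    by (rule Bochner_Integration.integrable_bound[OF ib])
       (use bd in \<open>auto intro!: AE_I2 order.trans[OF _ abs_ge_self]\<close>)
  then have "\<bar>Aop m f \<xi>\<bar> \<le> integral\<^sup>L lborel (\<lambda>s. indicator ?I s * B)"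
    unfolding Aop_def set_lebesgue_integral_def using integral_abs_bound_integral[OF _ ib bd] by simp
  also have "\<dots> = real m * B" by (simp add: mult.commute)
  finally show ?thesis .
qed

lemma Aop_eq_integral:
  assumes "continuous_on UNIV F"
  shows "Aop m F \<xi> = integral {- real m / 2 .. real m / 2} (\<lambda>s. F (\<xi> + s))"
proof -
  have "continuous_on {- real m / 2 .. real m / 2} (\<lambda>s. F (\<xi> + s))"
    by (rule continuous_on_compose2[OF assms]) (auto intro!: continuous_intros)
  then have "set_integrable lborel {- real m / 2 .. real m / 2} (\<lambda>s. F (\<xi> + s))"
    unfolding set_integrable_def by (rule borel_integrable_compact[rotated]) simp
  then show ?thesis unfolding Aop_def by (rule set_borel_integral_eq_integral(2))
qed

lemma Aop_has_real_derivative: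
  assumes "smooth F"
  shows "(Aop m F has_real_derivative F (\<xi> + real m / 2) - F (\<xi> - real m / 2)) (at \<xi>)"
proof -
  define a where "a = real m / 2"
  have a0: "0 \<le> a" unfolding a_def by simp
  have cF: "continuous_on UNIV F" using smooth_continuous_on[OF assms] .
  have cD: "continuous_on UNIV (deriv F)" using smooth_continuous_on[OF smooth_deriv[OF assms]] .
  have dF: "(F has_real_derivative deriv F x) (at x)" for x
    using smooth_has_real_derivative[OF assms] .
  have eq: "Aop m F = (\<lambda>\<xi>. integral (cbox (-a) a) (\<lambda>s. F (\<xi> + s)))"
    using Aop_eq_integral[OF cF] unfolding a_def cbox_interval by auto
  have "((\<lambda>\<xi>. integral (cbox (-a) a) (\<lambda>s. F (\<xi> + s))) has_field_derivative
      integral (cbox (-a) a) (\<lambda>s. deriv F (\<xi> + s))) (at \<xi> within UNIV)"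
  proof (rule leibniz_rule_field_derivative)
    fix x t :: real
    show "((\<lambda>x. F (x + t)) has_field_derivative deriv F (x + t)) (at x within UNIV)"
      using dF[of "x + t"] by (simp add: DERIV_shift)
  next
    fix x :: real
    show "(\<lambda>s. F (x + s)) integrable_on cbox (- a) a"
      by (rule integrable_continuous) (rule continuous_on_compose2[OF cF]; auto intro!: continuous_intros)
  next
    have "continuous_on UNIV (\<lambda>p::real\<times>real. deriv F (fst p + snd p))"
      by (rule continuous_on_compose2[OF cD]) (auto intro!: continuous_intros)
    then show "continuous_on (UNIV \<times> cbox (- a) a) (\<lambda>(x, t). deriv F (x + t))"
      unfolding case_prod_beta by (rule continuous_on_subset) auto
  qed auto
  moreover have "((\<lambda>s. deriv F (\<xi> + s)) has_integral (F (\<xi> + a) - F (\<xi> + - a))) {-a..a}"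
  proof (rule fundamental_theorem_of_calculus)
    fix x assume "x \<in> {-a..a}"
    have "((\<lambda>s. F (\<xi> + s)) has_real_derivative deriv F (\<xi> + x)) (at x)"
      using dF[of "\<xi> + x"] DERIV_shift[of F "deriv F (\<xi> + x)" x \<xi>] by (simp add: add.commute)
    then show "((\<lambda>s. F (\<xi> + s)) has_vector_derivative deriv F (\<xi> + x)) (at x within {-a..a})"
      by (simp add: has_real_derivative_iff_has_vector_derivative has_vector_derivative_at_within)
  qed (use a0 in simp)
  ultimately show ?thesis
    unfolding eq a_def cbox_interval by (simp add: integral_unique)
qed

lemma Aop_eq_0_outside:
  assumes "\<And>x. R < \<bar>x\<bar> \<Longrightarrow> F x = 0" "R + real m / 2 < \<bar>x\<bar>"
  shows "Aop m F x = 0"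
proof -
  have "indicator {- real m / 2 .. real m / 2} s * F (x + s) = 0" for s :: real
    using assms(1)[of "x + s"] assms(2) by (auto split: split_indicator)
  then have "(\<lambda>s. indicator {- real m / 2 .. real m / 2} s * F (x + s)) = (\<lambda>s. 0)" by (rule ext)
  then show ?thesis unfolding Aop_def set_lebesgue_integral_def by simp
qed

lemma Aop_even:
  assumes "continuous_on UNIV F" "\<And>x. F (- x) = F x"
  shows "Aop m F (- x) = Aop m F x"
proof -
  let ?a = "real m / 2"
  have reflect: "F (- x + s) = F (x + - s)" for s
  proof -
    have "F (- x + s) = F (- (x + - s))" by simp
    also have "\<dots> = F (x + - s)" by (rule assms(2))
    finally show ?thesis .
  qed
  have "Aop m F (- x) = integral {-?a..?a} (\<lambda>s. F (- x + s))"
    using Aop_eq_integral[OF assms(1)] by simp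
  also have "\<dots> = integral {-?a..?a} (\<lambda>s. F (x + - s))" unfolding reflect ..
  also have "\<dots> = integral {-?a..?a} (\<lambda>s. F (x + s))"
    using Henstock_Kurzweil_Integration.integral_reflect_real[of ?a "-?a" "\<lambda>s. F (x + s)"] by simp
  also have "\<dots> = Aop m F x" using Aop_eq_integral[OF assms(1)] by simp
  finally show ?thesis .
qed

lemma smooth_profile_Aop:
  assumes "smooth_profile F"
  shows "smooth_profile (Aop m F)"
proof -
  define a where "a = real m / 2"
  have a0: "0 \<le> a" unfolding a_def by simp
  obtain R where R: "\<And>x. R < \<bar>x\<bar> \<Longrightarrow> F x = 0" using smooth_profileE_support[OF assms] by blast
  have sm: "smooth F" using smooth_profile_smooth[OF assms] .
  have even: "F (- x) = F x" for x using smooth_profile_even[OF assms] .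
  have d: "(Aop m F has_real_derivative F (x + a) - F (x + - a)) (at x)" for x
    using Aop_has_real_derivative[OF sm] unfolding a_def by simp
  have deriv_Aop: "deriv (Aop m F) x = F (x + a) - F (x - a)" for x
    using d by (simp add: DERIV_imp_deriv)
  show ?thesis
    unfolding smooth_profile_iff
  proof (intro conjI allI impI)
    show "smooth (Aop m F)"
      by (rule smooth_from_deriv[OF d]) (rule smooth_diff[OF smooth_shift[OF sm] smooth_shift[OF sm]])
    show "\<exists>R. \<forall>x. R < \<bar>x\<bar> \<longrightarrow> Aop m F x = 0"
      using Aop_eq_0_outside[OF R] by (intro exI[of _ "R + real m / 2"]) simp
    fix x :: real assume x: "0 \<le> x"
    show "Aop m F x = Aop m F (- x)" using Aop_even[OF smooth_continuous_on[OF sm] even] by simp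
    show "0 \<le> Aop m F x" by (rule Aop_nonneg) (rule smooth_profile_nonneg[OF assms])
    have "F (- x + a) = F (- (x - a))" "F (- x - a) = F (- (x + a))" by simp_all
    then show "deriv (Aop m F) x = - deriv (Aop m F) (- x)"
      unfolding deriv_Aop even by simp
    have "F (x + a) \<le> F \<bar>x - a\<bar>"
      by (rule smooth_profile_antimono[OF assms]) (use x a0 in auto)
    also have "F \<bar>x - a\<bar> = F (x - a)" using even[of "x - a"] by (simp add: abs_if)
    finally show "deriv (Aop m F) x \<le> 0" unfolding deriv_Aop by simp
  qed
qed

lemma Aop_nonneg_cone:
  assumes "W \<in> cone" shows "0 \<le> Aop m W \<xi>"
proof -
  have [measurable]: "W \<in> borel_measurable borel"
    using square_integrable_borel_measurable[OF cone_square_integrable[OF assms]] .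
  have "AE s in lborel. 0 \<le> W (\<xi> + 1 * s)"
    using cone_nonneg_AE[OF assms] by (intro AE_borel_affine) auto
  then have "AE s in lborel. 0 \<le> indicator {- real m / 2 .. real m / 2} s * W (\<xi> + s)"
    by eventually_elim (auto split: split_indicator)
  then show ?thesis unfolding Aop_def set_lebesgue_integral_def
    by (simp add: integral_nonneg_AE)
qed

lemma cone_Aop:
  assumes "f \<in> cone" shows "Aop m f \<in> cone"
proof (rule coneI_approx)
  have Lf: "square_integrable f" using cone_square_integrable[OF assms] .
  show "square_integrable (Aop m f)" using square_integrable_Aop(1)[OF Lf] .
  fix e :: real assume e: "e > 0"
  obtain F where F: "smooth_profile F" "L2norm (\<lambda>x. F x - f x) < e / (real m + 1)"
    using coneE_approx[OF assms, of "e / (real m + 1)"] e by auto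
  have LF: "square_integrable F" using smooth_profile_square_integrable[OF F(1)] .
  have "L2norm (\<lambda>x. Aop m F x - Aop m f x) \<le> real m * L2norm (\<lambda>x. F x - f x)"
    by (rule L2norm_Aop_diff_le[OF LF Lf])
  also have "\<dots> \<le> real m * (e / (real m + 1))"
    using F(2) by (intro mult_left_mono) auto
  also have "\<dots> < e" using e by (simp add: field_simps)
  finally show "\<exists>g\<in>cone. L2norm (\<lambda>x. g x - Aop m f x) < e"
    using smooth_profile_in_cone[OF smooth_profile_Aop[OF F(1)]] by (intro bexI[of _ "Aop m F"]) auto
qed

lemma Aop_eq_0_AE_imp_eq_0_AE:
  assumes Lf: "square_integrable f" and nn: "AE x in lborel. 0 \<le> f x"
    and zero: "AE \<xi> in lborel. Aop m f \<xi> = 0" and m: "0 < m"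
  shows "AE x in lborel. f x = 0"
proof -
  have [measurable]: "f \<in> borel_measurable borel" using square_integrable_borel_measurable[OF Lf] .
  have [measurable]: "Aop m f \<in> borel_measurable borel" by (rule Aop_measurable) simp
  define fp where "fp = (\<lambda>x. max (f x) 0)"
  have [measurable]: "fp \<in> borel_measurable borel" unfolding fp_def by measurable
  let ?I = "{- real m / 2 .. real m / 2}"
  have eq: "ennreal (Aop m f \<xi>) = (\<integral>\<^sup>+s. ennreal (indicator ?I s * fp (\<xi> + s)) \<partial>lborel)" for \<xi>
  proof -
    have "AE s in lborel. 0 \<le> f (\<xi> + 1 * s)"
      using nn by (intro AE_borel_affine) auto
    then have ae: "AE s in lborel. indicator ?I s * f (\<xi> + s) = indicator ?I s * fp (\<xi> + s)"
      by eventually_elim (auto simp: fp_def)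
    have "integrable lborel (\<lambda>s. indicator ?I s * f (\<xi> + s))"
      using square_integrable_set_integrable[OF square_integrable_shift(1)[OF Lf]]
      unfolding set_integrable_def by simp
    then have i2: "integrable lborel (\<lambda>s. indicator ?I s * fp (\<xi> + s))"
      by (rule integrable_cong_AE_imp[OF _ _ ae]) measurable
    have "Aop m f \<xi> = integral\<^sup>L lborel (\<lambda>s. indicator ?I s * fp (\<xi> + s))"
      unfolding Aop_def set_lebesgue_integral_def using ae by (simp add: integral_cong_AE)
    also have "ennreal \<dots> = (\<integral>\<^sup>+s. ennreal (indicator ?I s * fp (\<xi> + s)) \<partial>lborel)"
      by (rule nn_integral_eq_integral[symmetric, OF i2]) (auto simp: fp_def)
    finally show ?thesis .
  qed
  have "(\<integral>\<^sup>+\<xi>. ennreal (Aop m f \<xi>) \<partial>lborel) = 0"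
    using zero by (subst nn_integral_0_iff_AE) auto
  then have "ennreal (real m) * (\<integral>\<^sup>+x. ennreal (fp x) \<partial>lborel) = 0"
    unfolding eq using nn_integral_interval_translates[of fp "- real m / 2" "real m / 2"] by simp
  then have "(\<integral>\<^sup>+x. ennreal (fp x) \<partial>lborel) = 0" using m by simp
  then have "AE x in lborel. ennreal (fp x) = 0" by (subst (asm) nn_integral_0_iff_AE) auto
  then show ?thesis using nn by eventually_elim (auto simp: fp_def)
qed

section \<open>Composition with nondecreasing functions\<close>

lemma Lipschitz_bound_Icc:
  fixes f f' :: "real \<Rightarrow> real"
  assumes "\<And>r. r \<in> {a..b} \<Longrightarrow> (f has_real_derivative f' r) (at r within {a..b})"
    and "\<And>r. r \<in> {a..b} \<Longrightarrow> \<bar>f' r\<bar> \<le> B" and "x \<in> {a..b}" "y \<in> {a..b}"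
  shows "\<bar>f x - f y\<bar> \<le> B * \<bar>x - y\<bar>"
  using field_differentiable_bound[of "{a..b}" f f' B x y] assms by auto

lemma measurable_comp_Icc:
  fixes h u :: "real \<Rightarrow> real"
  assumes "continuous_on {a..b} h" "a \<le> b" "\<And>x. u x \<in> {a..b}" "u \<in> borel_measurable borel"
  shows "(\<lambda>x. h (u x)) \<in> borel_measurable borel"
proof -
  define h_ext where "h_ext = (\<lambda>r. h (max a (min b r)))"
  have "continuous_on UNIV h_ext" unfolding h_ext_def
    by (rule continuous_on_compose2[OF assms(1)]) (use assms(2) in \<open>auto intro!: continuous_intros\<close>)
  then have [measurable]: "h_ext \<in> borel_measurable borel" by (simp add: borel_measurable_continuous_onI)
  have [measurable]: "u \<in> borel_measurable borel" by fact
  have "h (u x) = h_ext (u x)" for x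
  proof -
    have "max a (min b (u x)) = u x" using assms(3)[of x] by auto
    then show ?thesis unfolding h_ext_def by simp
  qed
  then have "(\<lambda>x. h (u x)) = (\<lambda>x. h_ext (u x))" by simp
  then show ?thesis by simp
qed

lemma L2norm_comp_lipschitz_le:
  fixes h u v :: "real \<Rightarrow> real"
  assumes h: "L-lipschitz_on {0..R} h"
    and u: "\<And>x. u x \<in> {0..R}" "u \<in> borel_measurable borel"
    and v: "\<And>x. v x \<in> {0..R}" "v \<in> borel_measurable borel"
    and uv: "square_integrable (\<lambda>x. u x - v x)"
  shows "square_integrable (\<lambda>x. h (u x) - h (v x))"
    and "L2norm (\<lambda>x. h (u x) - h (v x)) \<le> L * L2norm (\<lambda>x. u x - v x)"
proof -
  have R: "0 \<le> R" using u(1)[of 0] by simp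
  have L: "0 \<le> L" using lipschitz_on_nonneg[OF h] .
  have h_cont: "continuous_on {0..R} h" using lipschitz_on_continuous_on[OF h] .
  have "(\<lambda>x. h (u x) - h (v x)) \<in> borel_measurable lborel"
    using measurable_comp_Icc[OF h_cont R u] measurable_comp_Icc[OF h_cont R v] by simp
  moreover have "AE x in lborel. \<bar>h (u x) - h (v x)\<bar> \<le> \<bar>L * (u x - v x)\<bar>"
    using lipschitz_onD[OF h u(1) v(1)] L by (intro AE_I2) (simp add: dist_real_def abs_mult)
  ultimately show "square_integrable (\<lambda>x. h (u x) - h (v x))"
    "L2norm (\<lambda>x. h (u x) - h (v x)) \<le> L * L2norm (\<lambda>x. u x - v x)"
    using square_integrable_dominated[OF _ square_integrable_cmult[OF uv, of L]] L
    by (simp_all add: L2norm_cmult)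
qed

lemma has_real_derivative_polynomial_antiderivative:
  fixes c :: "nat \<Rightarrow> real"
  shows "((\<lambda>x. d * x + (\<Sum>i\<le>n. c i / real (Suc i) * x ^ Suc i)) has_real_derivative
           d + (\<Sum>i\<le>n. c i * x ^ i)) (at x)"
proof -
  have "((\<lambda>x. \<Sum>i\<le>n. c i / real (Suc i) * x ^ Suc i) has_real_derivative
           (\<Sum>i\<le>n. c i / real (Suc i) * (real (Suc i) * x ^ i))) (at x)"
    by (intro DERIV_sum DERIV_cmult) (use DERIV_pow[of "Suc _" x] in simp)
  moreover have "(\<Sum>i\<le>n. c i / real (Suc i) * (real (Suc i) * x ^ i)) = (\<Sum>i\<le>n. c i * x ^ i)"
    by (intro sum.cong) (auto simp del: of_nat_Suc)
  ultimately show ?thesis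
    by (intro DERIV_add) (auto intro!: derivative_eq_intros)
qed

lemma polynomial_approx_nondecreasing:
  fixes h h' :: "real \<Rightarrow> real"
  assumes h0: "h 0 = 0"
    and hd: "\<And>r. r \<in> {0..R} \<Longrightarrow> (h has_real_derivative h' r) (at r within {0..R})"
    and hc: "continuous_on {0..R} h'"
    and hp: "\<And>r. r \<in> {0..R} \<Longrightarrow> 0 \<le> h' r"
    and R: "0 \<le> R" and \<eta>: "0 < \<eta>"
  obtains P where "real_polynomial_function P" "P 0 = 0" "\<And>r. r \<in> {0..R} \<Longrightarrow> 0 \<le> deriv P r"
    "\<And>r. r \<in> {0..R} \<Longrightarrow> \<bar>P r - h r\<bar> \<le> \<eta>"
proof -
  define \<delta> where "\<delta> = \<eta> / (2 * (R + 1))"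
  have \<delta>: "0 < \<delta>" unfolding \<delta>_def using R \<eta> by simp
  obtain q where q: "real_polynomial_function q" "\<And>r. r \<in> {0..R} \<Longrightarrow> \<bar>h' r - q r\<bar> < \<delta>"
    using Stone_Weierstrass_real_polynomial_function[OF compact_Icc hc \<delta>] by blast
  obtain c n where q_eq: "q = (\<lambda>x. \<Sum>i\<le>n. c i * x ^ i)"
    using q(1) unfolding real_polynomial_function_iff_sum by blast
  \<comment> \<open>an antiderivative of \<open>\<delta> + q\<close>; the shift by \<open>\<delta>\<close> makes it nondecreasing\<close>
  define P where "P = (\<lambda>x. \<delta> * x + (\<Sum>i\<le>n. c i / real (Suc i) * x ^ Suc i))"
  have dP: "(P has_real_derivative \<delta> + q x) (at x)" for x
    unfolding P_def q_eq by (rule has_real_derivative_polynomial_antiderivative)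
  then have deriv_P: "deriv P x = \<delta> + q x" for x by (rule DERIV_imp_deriv)
  show ?thesis
  proof (rule that)
    show "real_polynomial_function P"
      unfolding P_def
      by (intro real_polynomial_function.intros(2-4) real_polynomial_function_sum
          real_polynomial_function_power finite_atMost
          real_polynomial_function.intros(1)[OF bounded_linear_ident])
    show P0: "P 0 = 0" unfolding P_def by simp
    show "0 \<le> deriv P r" if "r \<in> {0..R}" for r
      using q(2)[OF that] hp[OF that] unfolding deriv_P by linarith
    show "\<bar>P r - h r\<bar> \<le> \<eta>" if r: "r \<in> {0..R}" for r
    proof -
      have "\<bar>(P r - h r) - (P 0 - h 0)\<bar> \<le> 2 * \<delta> * \<bar>r - 0\<bar>"
      proof (rule Lipschitz_bound_Icc[of 0 R])
        fix s assume s: "s \<in> {0..R}"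
        show "((\<lambda>r. P r - h r) has_real_derivative \<delta> + q s - h' s) (at s within {0..R})"
          by (rule DERIV_diff[OF has_field_derivative_at_within[OF dP] hd[OF s]])
        show "\<bar>\<delta> + q s - h' s\<bar> \<le> 2 * \<delta>" using q(2)[OF s] by linarith
      qed (use r R in auto)
      also have "\<dots> \<le> 2 * \<delta> * R" using r \<delta> by (intro mult_left_mono) auto
      also have "\<dots> \<le> \<eta>" unfolding \<delta>_def using R \<eta> by (simp add: field_simps)
      finally show ?thesis using P0 h0 by simp
    qed
  qed
qed

lemma comp_smooth_profile_in_cone:
  fixes h h' :: "real \<Rightarrow> real"
  assumes G: "smooth_profile G" and G_range: "\<And>x. G x \<in> {0..R}"
    and h0: "h 0 = 0"
    and hd: "\<And>r. r \<in> {0..R} \<Longrightarrow> (h has_real_derivative h' r) (at r within {0..R})"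
    and hc: "continuous_on {0..R} h'"
    and hp: "\<And>r. r \<in> {0..R} \<Longrightarrow> 0 \<le> h' r"
  shows "(\<lambda>x. h (G x)) \<in> cone"
proof -
  have R: "0 \<le> R" using G_range[of 0] by simp
  obtain S where S: "0 \<le> S" "\<And>x. S < \<bar>x\<bar> \<Longrightarrow> G x = 0" using smooth_profileE_support[OF G] by blast
  have h_cont: "continuous_on {0..R} h" by (rule DERIV_continuous_on[OF hd])
  have G_meas: "G \<in> borel_measurable borel"
    by (rule smooth_borel_measurable[OF smooth_profile_smooth[OF G]])
  have hG_meas: "(\<lambda>x. h (G x)) \<in> borel_measurable borel"
    by (rule measurable_comp_Icc[OF h_cont R G_range G_meas])
  obtain B where B: "\<And>r. r \<in> {0..R} \<Longrightarrow> \<bar>h r\<bar> \<le> B"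
    using compact_imp_bounded[OF compact_continuous_image[OF h_cont compact_Icc]]
    unfolding bounded_iff by (metis image_eqI real_norm_def)
  have hG_support: "h (G x) = 0" if "S < \<bar>x\<bar>" for x using S(2)[OF that] h0 by simp
  show ?thesis
  proof (rule coneI_approx)
    show "square_integrable (\<lambda>x. h (G x))"
      using square_integrable_bounded_support(1)[OF _ B[OF G_range] hG_support S(1)] hG_meas by simp
    fix e :: real assume e: "0 < e"
    have sqrt_S: "0 \<le> sqrt (2 * S)" using S(1) by simp
    define \<eta> where "\<eta> = e / (sqrt (2 * S) + 1)"
    have \<eta>: "0 < \<eta>" unfolding \<eta>_def using e sqrt_S by (simp add: add_nonneg_pos)
    obtain P where P: "real_polynomial_function P" "P 0 = 0" "\<And>r. r \<in> {0..R} \<Longrightarrow> 0 \<le> deriv P r"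
        "\<And>r. r \<in> {0..R} \<Longrightarrow> \<bar>P r - h r\<bar> \<le> \<eta>"
      using polynomial_approx_nondecreasing[OF h0 hd hc hp R \<eta>] by blast
    have PG: "smooth_profile (\<lambda>x. P (G x))"
      by (rule smooth_profile_polynomial_comp[OF G G_range P(1-3)])
    have "(\<lambda>x. P (G x)) \<in> borel_measurable borel"
      by (rule smooth_borel_measurable[OF smooth_profile_smooth[OF PG]])
    then have "L2norm (\<lambda>x. P (G x) - h (G x)) \<le> \<eta> * sqrt (2 * S)"
      using square_integrable_bounded_support(2)[OF _ P(4)[OF G_range] _ S(1)] hG_meas S(2) P(2) h0
      by simp
    also have "\<dots> = e * (sqrt (2 * S) / (sqrt (2 * S) + 1))" unfolding \<eta>_def by simp
    also have "\<dots> < e"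
      using mult_strict_left_mono[of "sqrt (2 * S) / (sqrt (2 * S) + 1)" 1 e] e sqrt_S by simp
    finally show "\<exists>g\<in>cone. L2norm (\<lambda>x. g x - h (G x)) < e"
      using smooth_profile_in_cone[OF PG] by (intro bexI[of _ "\<lambda>x. P (G x)"]) auto
  qed
qed

lemma lipschitz_on_Icc_derivative:
  fixes h h' :: "real \<Rightarrow> real"
  assumes hd: "\<And>r. r \<in> {a..b} \<Longrightarrow> (h has_real_derivative h' r) (at r within {a..b})"
    and hc: "continuous_on {a..b} h'"
  obtains L where "L-lipschitz_on {a..b} h"
proof -
  obtain B where B: "\<And>r. r \<in> {a..b} \<Longrightarrow> \<bar>h' r\<bar> \<le> B"
    using compact_imp_bounded[OF compact_continuous_image[OF hc compact_Icc]]
    unfolding bounded_iff by (metis image_eqI real_norm_def)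
  then have B': "\<bar>h' r\<bar> \<le> max B 0" if "r \<in> {a..b}" for r using that by fastforce
  have "\<bar>h x - h y\<bar> \<le> max B 0 * \<bar>x - y\<bar>" if "x \<in> {a..b}" "y \<in> {a..b}" for x y
    by (rule Lipschitz_bound_Icc[OF hd B' that])
  then have "(max B 0)-lipschitz_on {a..b} h"
    by (intro lipschitz_onI) (simp_all add: dist_real_def)
  then show ?thesis by (rule that)
qed

lemma comp_Aop_in_cone:
  fixes h h' :: "real \<Rightarrow> real"
  assumes W: "W \<in> cone" and m: "0 < m" and R: "sqrt (real m) * L2norm W < R"
    and h0: "h 0 = 0"
    and hd: "\<And>r. r \<in> {0..R} \<Longrightarrow> (h has_real_derivative h' r) (at r within {0..R})"
    and hc: "continuous_on {0..R} h'"
    and hp: "\<And>r. r \<in> {0..R} \<Longrightarrow> 0 \<le> h' r"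
  shows "(\<lambda>x. h (Aop m W x)) \<in> cone"
proof -
  have LW: "square_integrable W" using cone_square_integrable[OF W] .
  have AW_meas: "Aop m W \<in> borel_measurable borel"
    by (rule Aop_measurable[OF square_integrable_borel_measurable[OF LW]])
  have AW_range: "Aop m W x \<in> {0..R}" for x
    using Aop_nonneg_cone[OF W, of m x] abs_Aop_le_L2norm[OF LW, of m x] R by auto
  obtain L where h_lipschitz: "L-lipschitz_on {0..R} h" using lipschitz_on_Icc_derivative[OF hd hc] .
  have L0: "0 \<le> L" using lipschitz_on_nonneg[OF h_lipschitz] .
  note h_comp = L2norm_comp_lipschitz_le[OF h_lipschitz]
  show ?thesis
  proof (rule coneI_approx)
    show "square_integrable (\<lambda>x. h (Aop m W x))"
      using h_comp(1)[OF AW_range AW_meas, of "\<lambda>x. 0"] square_integrable_Aop(1)[OF LW] h0 AW_range[of 0]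
      by simp
    fix e :: real assume e: "0 < e"
    have W_small: "L2norm W < R / sqrt (real m)" using R m by (simp add: pos_less_divide_eq mult.commute)
    have c: "0 < real m * L + 1" using L0 by (intro add_nonneg_pos mult_nonneg_nonneg) simp_all
    then have "0 < e / (real m * L + 1)" using e by simp
    then obtain F where F: "smooth_profile F" "L2norm (\<lambda>x. F x - W x) < e / (real m * L + 1)"
        "L2norm F < R / sqrt (real m)"
      using coneE_approx_norm_less[OF W W_small] by blast
    have LF: "square_integrable F" using smooth_profile_square_integrable[OF F(1)] .
    have "sqrt (real m) * L2norm F < R" using F(3) m by (simp add: pos_less_divide_eq mult.commute)
    then have AF_range: "Aop m F x \<in> {0..R}" for x
      using smooth_profile_nonneg[OF smooth_profile_Aop[OF F(1), of m], of x] abs_Aop_le_L2norm[OF LF, of m x]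
      by auto
    have AF_meas: "Aop m F \<in> borel_measurable borel"
      by (rule Aop_measurable[OF square_integrable_borel_measurable[OF LF]])
    have "L2norm (\<lambda>x. h (Aop m F x) - h (Aop m W x)) \<le> L * L2norm (\<lambda>x. Aop m F x - Aop m W x)"
      by (rule h_comp(2)[OF AF_range AF_meas AW_range AW_meas])
         (intro square_integrable_diff square_integrable_Aop(1) LF LW)
    also have "\<dots> \<le> L * (real m * L2norm (\<lambda>x. F x - W x))"
      using L2norm_Aop_diff_le[OF LF LW, of m] L0 by (rule mult_left_mono)
    also have "\<dots> \<le> (real m * L + 1) * L2norm (\<lambda>x. F x - W x)"
      using L2norm_nonneg[of "\<lambda>x. F x - W x"] by (simp add: algebra_simps)
    also have "\<dots> < e" using F(2) c by (simp add: pos_less_divide_eq mult.commute)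
    finally show "\<exists>g\<in>cone. L2norm (\<lambda>x. g x - h (Aop m W x)) < e"
      using comp_smooth_profile_in_cone[OF smooth_profile_Aop[OF F(1)] AF_range h0 hd hc hp]
      by (intro bexI[of _ "\<lambda>x. h (Aop m F x)"]) auto
  qed
qed

section \<open>The gradient of the potential energy\<close>

definition dP_term :: "(nat \<Rightarrow> nat \<Rightarrow> real \<Rightarrow> real) \<Rightarrow> real \<Rightarrow> (real \<Rightarrow> real) \<Rightarrow> nat \<Rightarrow> real \<Rightarrow> real" where
  "dP_term dPhi \<nu> W m = Aop m (\<lambda>x. dPsi dPhi \<nu> m (Aop m W x))"

definition dP_term_bound :: "(nat \<Rightarrow> nat \<Rightarrow> real \<Rightarrow> real) \<Rightarrow> real \<Rightarrow> (real \<Rightarrow> real) \<Rightarrow> nat \<Rightarrow> real" where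
  "dP_term_bound dPhi \<nu> W m =
     real m ^ 2 * dPhi m 2 (\<nu> * real m - sqrt (real m) * L2norm W) * L2norm W"

lemma dP_eq_suminf: "dP dPhi \<nu> W = (\<lambda>\<xi>. \<Sum>n. dP_term dPhi \<nu> W (Suc n) \<xi>)"
  unfolding dP_def dP_term_def ..

lemma summable_dP_term_bound:
  assumes "summable (\<lambda>m. dPhi m 2 (\<nu> * real m - sqrt (real m) * L2norm W) * real m ^ 2)"
  shows "summable (\<lambda>n. dP_term_bound dPhi \<nu> W (Suc n))"
proof -
  have "summable (\<lambda>n. dPhi (Suc n) 2 (\<nu> * real (Suc n) - sqrt (real (Suc n)) * L2norm W)
      * real (Suc n) ^ 2 * L2norm W)"
    using assms by (subst summable_Suc_iff) (rule summable_mult2)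
  then show ?thesis unfolding dP_term_bound_def by (simp only: mult_ac)
qed

locale alternating_derivatives =
  fixes dPhi :: "nat \<Rightarrow> nat \<Rightarrow> real \<Rightarrow> real"
  assumes dPhi_deriv: "\<And>m k x. m \<ge> 1 \<Longrightarrow> k < 4 \<Longrightarrow> x \<ge> 0 \<Longrightarrow>
      (dPhi m k has_real_derivative dPhi m (Suc k) x) (at x within {0..})"
    and dPhi_signs: "\<And>m k x. m \<ge> 1 \<Longrightarrow> k \<le> 4 \<Longrightarrow> x \<ge> 0 \<Longrightarrow> (-1)^k * dPhi m k x \<ge> 0"
begin

lemma dPhi_has_real_derivative:
  assumes "m \<ge> 1" "k < 4" "x > 0"
  shows "(dPhi m k has_real_derivative dPhi m (Suc k) x) (at x)"
proof -
  have "at x within {0..} = at x" using assms(3) by (intro at_within_interior) simp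
  then show ?thesis using dPhi_deriv[OF assms(1,2), of x] assms(3) by simp
qed

lemma dPhi2_nonneg: "m \<ge> 1 \<Longrightarrow> x \<ge> 0 \<Longrightarrow> 0 \<le> dPhi m 2 x"
  using dPhi_signs[of m 2 x] by simp

lemma dPhi2_antimono:
  assumes "m \<ge> 1" "0 < a" "a \<le> b"
  shows "dPhi m 2 b \<le> dPhi m 2 a"
proof (rule DERIV_nonpos_imp_nonincreasing[OF assms(3)])
  fix x assume "a \<le> x" "x \<le> b"
  then show "\<exists>y. DERIV (dPhi m 2) x :> y \<and> y \<le> 0"
    using dPhi_has_real_derivative[OF assms(1), of 2 x] dPhi_signs[OF assms(1), of 3 x] assms(2)
    by (intro exI[of _ "dPhi m 3 x"]) (simp add: numeral_3_eq_3 numeral_2_eq_2)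
qed

lemma dPsi_has_real_derivative:
  assumes m: "m \<ge> 1" and r: "r < \<nu> * real m"
  shows "(dPsi dPhi \<nu> m has_real_derivative dPhi m 2 (\<nu> * real m - r)) (at r)"
proof -
  have "(dPhi m 1 has_real_derivative dPhi m 2 (\<nu> * real m - r)) (at (\<nu> * real m - r))"
    using dPhi_has_real_derivative[OF m, of 1 "\<nu> * real m - r"] r by (simp add: numeral_2_eq_2)
  moreover have "((\<lambda>r. \<nu> * real m - r) has_real_derivative -1) (at r)"
    by (auto intro!: derivative_eq_intros)
  ultimately have "((\<lambda>r. dPhi m 1 (\<nu> * real m - r)) has_real_derivative dPhi m 2 (\<nu> * real m - r) * -1) (at r)"
    by (rule DERIV_chain2)
  then have "((\<lambda>r. dPhi m 1 (\<nu> * real m) - dPhi m 1 (\<nu> * real m - r)) has_real_derivative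
      0 - dPhi m 2 (\<nu> * real m - r) * -1) (at r)"
    by (intro DERIV_diff DERIV_const)
  then show ?thesis unfolding dPsi_def[abs_def] by simp
qed

lemma continuous_on_dPsi:
  assumes m: "m \<ge> 1" and \<rho>: "\<rho> < \<nu> * real m"
  shows "continuous_on {0..\<rho>} (dPsi dPhi \<nu> m)" "continuous_on {0..\<rho>} (\<lambda>r. dPhi m 2 (\<nu> * real m - r))"
proof -
  have "isCont (dPsi dPhi \<nu> m) r" if "r \<in> {0..\<rho>}" for r
    using dPsi_has_real_derivative[OF m, where r=r and \<nu>=\<nu>] that \<rho> by (auto intro: DERIV_isCont)
  then show "continuous_on {0..\<rho>} (dPsi dPhi \<nu> m)"
    by (intro continuous_at_imp_continuous_on ballI)
  have "isCont (\<lambda>r. dPhi m 2 (\<nu> * real m - r)) r" if "r \<in> {0..\<rho>}" for r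
  proof (rule isCont_o2[where f="\<lambda>r. \<nu> * real m - r"])
    show "isCont (\<lambda>r. \<nu> * real m - r) r" by (intro continuous_intros)
    have pos: "0 < \<nu> * real m - r" using that \<rho> by simp
    show "isCont (dPhi m 2) (\<nu> * real m - r)"
      by (rule DERIV_isCont[OF dPhi_has_real_derivative[OF m _ pos]]) simp
  qed
  then show "continuous_on {0..\<rho>} (\<lambda>r. dPhi m 2 (\<nu> * real m - r))"
    by (intro continuous_at_imp_continuous_on ballI)
qed

lemma dPsi_bounds:
  assumes m: "m \<ge> 1" and \<rho>: "0 \<le> \<rho>" "\<rho> < \<nu> * real m" and r: "r \<in> {0..\<rho>}"
  shows "0 \<le> dPsi dPhi \<nu> m r" "dPsi dPhi \<nu> m r \<le> dPhi m 2 (\<nu> * real m - \<rho>) * r"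
proof -
  have d: "(dPsi dPhi \<nu> m has_real_derivative dPhi m 2 (\<nu> * real m - x)) (at x)" if "x \<in> {0..\<rho>}" for x
    using dPsi_has_real_derivative[OF m, of x] that \<rho> by auto
  have dPsi0: "dPsi dPhi \<nu> m 0 = 0" unfolding dPsi_def by simp
  have "dPsi dPhi \<nu> m 0 \<le> dPsi dPhi \<nu> m r"
  proof (rule DERIV_nonneg_imp_nondecreasing[of 0 r])
    fix x assume "0 \<le> x" "x \<le> r"
    then have x: "x \<in> {0..\<rho>}" using r by auto
    then show "\<exists>y. DERIV (dPsi dPhi \<nu> m) x :> y \<and> 0 \<le> y"
      using d[OF x] dPhi2_nonneg[OF m, of "\<nu> * real m - x"] \<rho>
      by (intro exI[of _ "dPhi m 2 (\<nu> * real m - x)"]) auto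
  qed (use r in simp)
  then show "0 \<le> dPsi dPhi \<nu> m r" by (simp add: dPsi0)
  have "\<bar>dPsi dPhi \<nu> m r - dPsi dPhi \<nu> m 0\<bar> \<le> dPhi m 2 (\<nu> * real m - \<rho>) * \<bar>r - 0\<bar>"
  proof (rule Lipschitz_bound_Icc[of 0 \<rho> _ "\<lambda>x. dPhi m 2 (\<nu> * real m - x)"])
    fix x assume x: "x \<in> {0..\<rho>}"
    show "(dPsi dPhi \<nu> m has_real_derivative dPhi m 2 (\<nu> * real m - x)) (at x within {0..\<rho>})"
      using d[OF x] by (rule has_field_derivative_at_within)
    have "dPhi m 2 (\<nu> * real m - x) \<le> dPhi m 2 (\<nu> * real m - \<rho>)"
      by (rule dPhi2_antimono[OF m]) (use x \<rho> in auto)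
    moreover have "0 \<le> dPhi m 2 (\<nu> * real m - x)" by (rule dPhi2_nonneg[OF m]) (use x \<rho> in auto)
    ultimately show "\<bar>dPhi m 2 (\<nu> * real m - x)\<bar> \<le> dPhi m 2 (\<nu> * real m - \<rho>)" by simp
  qed (use r \<rho> in auto)
  then show "dPsi dPhi \<nu> m r \<le> dPhi m 2 (\<nu> * real m - \<rho>) * r" using r by (simp add: dPsi0)
qed

lemma dPsi_Aop_bounds:
  assumes W: "W \<in> cone" and m: "m \<ge> 1" and slack: "sqrt (real m) * L2norm W < \<nu> * real m"
  defines "L \<equiv> dPhi m 2 (\<nu> * real m - sqrt (real m) * L2norm W)"
  shows "0 \<le> dPsi dPhi \<nu> m (Aop m W x)"
    and "dPsi dPhi \<nu> m (Aop m W x) \<le> L * (sqrt (real m) * L2norm W)"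
    and "square_integrable (\<lambda>x. dPsi dPhi \<nu> m (Aop m W x))"
    and "L2norm (\<lambda>x. dPsi dPhi \<nu> m (Aop m W x)) \<le> L * (real m * L2norm W)"
proof -
  define \<rho> where "\<rho> = sqrt (real m) * L2norm W"
  define g where "g = (\<lambda>x. dPsi dPhi \<nu> m (Aop m W x))"
  have LW: "square_integrable W" using cone_square_integrable[OF W] .
  have \<rho>: "0 \<le> \<rho>" "\<rho> < \<nu> * real m" using slack unfolding \<rho>_def by (auto simp: L2norm_nonneg)
  have L0: "0 \<le> L" unfolding L_def using dPhi2_nonneg[OF m] slack by simp
  have AW_range: "Aop m W y \<in> {0..\<rho>}" for y
    using Aop_nonneg_cone[OF W, of m y] abs_Aop_le_L2norm[OF LW, of m y] unfolding \<rho>_def by auto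
  have g_bounds: "0 \<le> g y" "g y \<le> L * Aop m W y" for y
    using dPsi_bounds[OF m \<rho> AW_range[of y]] unfolding g_def L_def \<rho>_def by (auto simp: mult.commute)
  show "0 \<le> dPsi dPhi \<nu> m (Aop m W x)" using g_bounds(1) unfolding g_def .
  have "L * Aop m W x \<le> L * \<rho>" using AW_range[of x] L0 by (intro mult_left_mono) auto
  then show "dPsi dPhi \<nu> m (Aop m W x) \<le> L * (sqrt (real m) * L2norm W)"
    using g_bounds(2)[of x] unfolding g_def \<rho>_def by linarith
  have g_meas: "g \<in> borel_measurable lborel"
    unfolding g_def
    by (simp add: measurable_comp_Icc[OF continuous_on_dPsi(1)[OF m \<rho>(2)] \<rho>(1) AW_range]
        Aop_measurable square_integrable_borel_measurable[OF LW])
  have "AE y in lborel. \<bar>g y\<bar> \<le> \<bar>L * Aop m W y\<bar>"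
  proof (rule AE_I2)
    fix y show "\<bar>g y\<bar> \<le> \<bar>L * Aop m W y\<bar>" using g_bounds(1)[of y] g_bounds(2)[of y] by arith
  qed
  then have "square_integrable g" "L2norm g \<le> L2norm (\<lambda>x. L * Aop m W x)"
    using square_integrable_dominated[OF g_meas square_integrable_cmult[OF square_integrable_Aop(1)[OF LW]]]
    by auto
  moreover have "L2norm (\<lambda>x. L * Aop m W x) \<le> L * (real m * L2norm W)"
    using square_integrable_Aop(2)[OF LW, of m] L0 by (simp add: L2norm_cmult mult_left_mono)
  ultimately show "square_integrable (\<lambda>x. dPsi dPhi \<nu> m (Aop m W x))"
    "L2norm (\<lambda>x. dPsi dPhi \<nu> m (Aop m W x)) \<le> L * (real m * L2norm W)"
    unfolding g_def by auto
qed

lemma dP_term_in_cone: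
  assumes W: "W \<in> cone" and m: "m \<ge> 1" and slack: "sqrt (real m) * L2norm W < \<nu> * real m"
  shows "dP_term dPhi \<nu> W m \<in> cone"
proof -
  define R where "R = (sqrt (real m) * L2norm W + \<nu> * real m) / 2"
  have R1: "sqrt (real m) * L2norm W < R" using slack unfolding R_def by (simp add: field_simps)
  have R2: "R < \<nu> * real m" using slack unfolding R_def by (simp add: field_simps)
  have "(\<lambda>x. dPsi dPhi \<nu> m (Aop m W x)) \<in> cone"
  proof (rule comp_Aop_in_cone[OF W _ R1])
    show "0 < m" using m by simp
    show "dPsi dPhi \<nu> m 0 = 0" by (simp add: dPsi_def)
    show "(dPsi dPhi \<nu> m has_real_derivative dPhi m 2 (\<nu> * real m - r)) (at r within {0..R})"
      if "r \<in> {0..R}" for r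
      using dPsi_has_real_derivative[OF m, of r] that R2 by (auto intro: has_field_derivative_at_within)
    show "continuous_on {0..R} (\<lambda>r. dPhi m 2 (\<nu> * real m - r))"
      by (rule continuous_on_dPsi(2)[OF m R2])
    show "0 \<le> dPhi m 2 (\<nu> * real m - r)" if "r \<in> {0..R}" for r
      using dPhi2_nonneg[OF m] that R2 by auto
  qed
  then show ?thesis unfolding dP_term_def by (rule cone_Aop)
qed

lemma dP_term_bounds:
  assumes W: "W \<in> cone" and m: "m \<ge> 1" and slack: "sqrt (real m) * L2norm W < \<nu> * real m"
  shows "0 \<le> dP_term dPhi \<nu> W m x"
    and "dP_term dPhi \<nu> W m x \<le> dP_term_bound dPhi \<nu> W m"
    and "L2norm (dP_term dPhi \<nu> W m) \<le> dP_term_bound dPhi \<nu> W m"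
proof -
  note g = dPsi_Aop_bounds[OF W m slack]
  define L where "L = dPhi m 2 (\<nu> * real m - sqrt (real m) * L2norm W)"
  have L0: "0 \<le> L" unfolding L_def using dPhi2_nonneg[OF m] slack by simp
  have bound: "dP_term_bound dPhi \<nu> W m = real m * (L * (real m * L2norm W))"
    unfolding dP_term_bound_def L_def by (simp add: power2_eq_square)
  show "0 \<le> dP_term dPhi \<nu> W m x" unfolding dP_term_def by (rule Aop_nonneg) (rule g(1))
  have "\<bar>dPsi dPhi \<nu> m (Aop m W y)\<bar> \<le> L * (sqrt (real m) * L2norm W)" for y
    using g(1)[of y] g(2)[of y] unfolding L_def by arith
  then have "\<bar>dP_term dPhi \<nu> W m x\<bar> \<le> real m * (L * (sqrt (real m) * L2norm W))"
    unfolding dP_term_def by (rule abs_Aop_le) (rule square_integrable_borel_measurable[OF g(3)])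
  also have "\<dots> \<le> real m * (L * (real m * L2norm W))"
    using m L0 real_sqrt_le_mono[of "real m" "(real m)^2"]
    by (intro mult_left_mono mult_right_mono) (auto simp: power2_eq_square L2norm_nonneg)
  finally show "dP_term dPhi \<nu> W m x \<le> dP_term_bound dPhi \<nu> W m" unfolding bound by simp
  have "L2norm (dP_term dPhi \<nu> W m) \<le> real m * L2norm (\<lambda>x. dPsi dPhi \<nu> m (Aop m W x))"
    unfolding dP_term_def by (rule square_integrable_Aop(2)[OF g(3)])
  also have "\<dots> \<le> real m * (L * (real m * L2norm W))"
    using g(4) unfolding L_def by (intro mult_left_mono) auto
  finally show "L2norm (dP_term dPhi \<nu> W m) \<le> dP_term_bound dPhi \<nu> W m" unfolding bound .
qed

context
  fixes \<nu> :: real and W :: "real \<Rightarrow> real"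
  assumes W: "W \<in> cone"
    and slack: "\<And>m. m \<ge> 1 \<Longrightarrow> sqrt (real m) * L2norm W < \<nu> * real m"
    and summable: "summable (\<lambda>m. dPhi m 2 (\<nu> * real m - sqrt (real m) * L2norm W) * real m ^ 2)"
begin

lemma dP_term_Suc_bounds:
  shows "0 \<le> dP_term dPhi \<nu> W (Suc n) x" "dP_term dPhi \<nu> W (Suc n) x \<le> dP_term_bound dPhi \<nu> W (Suc n)"
    and "L2norm (dP_term dPhi \<nu> W (Suc n)) \<le> dP_term_bound dPhi \<nu> W (Suc n)"
  using dP_term_bounds[OF W _ slack[of "Suc n"]] by simp_all

lemma summable_dP_terms: "summable (\<lambda>n. dP_term dPhi \<nu> W (Suc n) x)"
  by (rule summable_comparison_test'[OF summable_dP_term_bound[of dPhi \<nu> W, OF summable], of 0])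
     (simp add: dP_term_Suc_bounds(1,2))

lemma dP_in_cone: "dP dPhi \<nu> W \<in> cone"
  unfolding dP_eq_suminf
  by (rule cone_suminf[OF dP_term_in_cone[OF W _ slack] dP_term_Suc_bounds(3)
        summable_dP_term_bound[of dPhi \<nu> W, OF summable] summable_dP_terms]) simp_all

lemma dPsi_pos:
  assumes strict: "\<And>s. s > 0 \<Longrightarrow> dPhi 1 2 s > 0" and r: "0 < r" "r < \<nu>"
  shows "0 < dPsi dPhi \<nu> 1 r"
proof -
  have "dPhi 1 1 (\<nu> - r) < dPhi 1 1 \<nu>"
  proof (rule DERIV_pos_imp_increasing[of "\<nu> - r" \<nu>])
    fix y assume "\<nu> - r \<le> y" "y \<le> \<nu>"
    then have "0 < y" using r by simp
    then show "\<exists>d. DERIV (dPhi 1 1) y :> d \<and> 0 < d"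
      using dPhi_has_real_derivative[of 1 1 y] strict[of y] by (auto simp: numeral_2_eq_2)
  qed (use r in simp)
  then show ?thesis unfolding dPsi_def by simp
qed

lemma L2norm_dP_pos:
  assumes W_pos: "0 < L2norm W" and strict: "\<And>s. s > 0 \<Longrightarrow> dPhi 1 2 s > 0"
  shows "0 < L2norm (dP dPhi \<nu> W)"
proof (rule ccontr)
  have LW: "square_integrable W" using cone_square_integrable[OF W] .
  have m1: "1 \<le> (1::nat)" by simp
  note dPsi_Aop = dPsi_Aop_bounds[OF W m1 slack[OF m1]]
  have slack1: "L2norm W < \<nu>" using slack[OF m1] by simp
  let ?g = "\<lambda>x. dPsi dPhi \<nu> 1 (Aop 1 W x)"
  assume "\<not> 0 < L2norm (dP dPhi \<nu> W)"
  then have "L2norm (dP dPhi \<nu> W) = 0" using L2norm_nonneg[of "dP dPhi \<nu> W"] by linarith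
  then have dP_zero: "AE x in lborel. dP dPhi \<nu> W x = 0"
    using L2norm_eq_0_imp_AE cone_square_integrable[OF dP_in_cone] by blast
  \<comment> \<open>all terms of the series are nonnegative, so the first one vanishes as well\<close>
  have "AE x in lborel. dP_term dPhi \<nu> W 1 x = 0"
    using dP_zero
  proof (rule eventually_mono)
    fix x assume "dP dPhi \<nu> W x = 0"
    moreover have "dP_term dPhi \<nu> W 1 x \<le> dP dPhi \<nu> W x"
      using sum_le_suminf[OF summable_dP_terms[of x], of "{0}"] dP_term_Suc_bounds(1)
      unfolding dP_eq_suminf by simp
    ultimately show "dP_term dPhi \<nu> W 1 x = 0"
      using dP_term_Suc_bounds(1)[of 0 x] by simp
  qed
  then have "AE x in lborel. Aop 1 ?g x = 0" unfolding dP_term_def .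
  then have "AE x in lborel. ?g x = 0"
    by (rule Aop_eq_0_AE_imp_eq_0_AE[OF dPsi_Aop(3) AE_I2[OF dPsi_Aop(1)]]) simp
  then have "AE x in lborel. Aop 1 W x = 0"
  proof (rule eventually_mono)
    fix x assume "?g x = 0"
    moreover have "0 \<le> Aop 1 W x" "Aop 1 W x < \<nu>"
      using Aop_nonneg_cone[OF W] abs_Aop_le_L2norm[OF LW, of 1 x] slack1 by auto
    ultimately show "Aop 1 W x = 0" using dPsi_pos[OF strict, of "Aop 1 W x"] by fastforce
  qed
  then have "AE x in lborel. W x = 0"
    by (rule Aop_eq_0_AE_imp_eq_0_AE[OF LW cone_nonneg_AE[OF W]]) simp
  then have "L2norm W = L2norm (\<lambda>x. 0)"
    by (rule L2norm_cong_AE) (use square_integrable_borel_measurable[OF LW] in auto)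
  then show False using W_pos by (simp add: L2norm_def)
qed

end

end

theorem lemma2p6:
  fixes Phi :: "nat \<Rightarrow> real \<Rightarrow> real"
    and dPhi :: "nat \<Rightarrow> nat \<Rightarrow> real \<Rightarrow> real"
    and \<nu> K \<gamma> :: real
    and W :: "real \<Rightarrow> real"
  assumes nu_pos: "\<nu> > 0"
    and K_pos: "0 < K" and K_bound: "K < \<nu>^2 / 2"
    and dPhi0: "\<And>m x. m \<ge> 1 \<Longrightarrow> x \<ge> 0 \<Longrightarrow> dPhi m 0 x = Phi m x"
    and dPhi_deriv: "\<And>m k x. m \<ge> 1 \<Longrightarrow> k < 4 \<Longrightarrow> x \<ge> 0 \<Longrightarrow>
          (dPhi m k has_real_derivative dPhi m (Suc k) x) (at x within {0..})"
    and dPhi_cont: "\<And>m. m \<ge> 1 \<Longrightarrow> continuous_on {0..} (dPhi m 4)"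
    and signs: "\<And>m k x. m \<ge> 1 \<Longrightarrow> k \<le> 4 \<Longrightarrow> x \<ge> 0 \<Longrightarrow> (-1)^k * dPhi m k x \<ge> 0"
    and signs_strict: "\<And>k s. k \<le> 4 \<Longrightarrow> s > 0 \<Longrightarrow> (-1)^k * dPhi 1 k s > 0"
    and gamma: "5/2 < \<gamma>" "\<gamma> < 3"
    and sum1: "summable (\<lambda>m. dPhi m 1 (\<nu> * real m - sqrt (2 * K * real m)) * real m)"
    and sum2: "summable (\<lambda>m. dPhi m 2 (\<nu> * real m - sqrt (2 * K * real m)) * real m ^ 2)"
    and sum3: "summable (\<lambda>m. dPhi m 2 (\<nu> * real m) * real m powr \<gamma>)"
    and sum4: "summable (\<lambda>m. dPhi m 3 (\<nu> * real m - sqrt (2 * K * real m)) * real m powr (3/2))"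
    and W: "W \<in> coneK K"
  shows "Top dPhi \<nu> W \<in> coneK K"
proof -
  interpret alternating_derivatives dPhi
    using dPhi_deriv signs by unfold_locales blast+
  have W_cone: "W \<in> cone" and "(L2norm W)^2 = 2 * K" using W unfolding coneK_def by auto
  then have norm_W: "L2norm W = sqrt (2 * K)" by (metis L2norm_nonneg real_sqrt_unique)
  have sqrt_norm: "sqrt (real m) * L2norm W = sqrt (2 * K * real m)" for m
    unfolding norm_W by (simp add: real_sqrt_mult mult.commute)
  have slack: "sqrt (real m) * L2norm W < \<nu> * real m" if "m \<ge> 1" for m :: nat
  proof -
    have "2 * K < \<nu>^2" using K_bound by simp
    then have "2 * K * real m < \<nu>^2 * real m" using that by (intro mult_strict_right_mono) auto
    also have "\<dots> \<le> \<nu>^2 * real m ^ 2" using that by (intro mult_left_mono) (auto simp: power2_eq_square)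
    also have "\<dots> = (\<nu> * real m)^2" by (simp add: power_mult_distrib)
    finally have "sqrt (2 * K * real m) < sqrt ((\<nu> * real m)^2)" by (rule real_sqrt_less_mono)
    then show ?thesis unfolding sqrt_norm using nu_pos by simp
  qed
  have summable: "summable (\<lambda>m. dPhi m 2 (\<nu> * real m - sqrt (real m) * L2norm W) * real m ^ 2)"
    using sum2 unfolding sqrt_norm .
  have W_pos: "0 < L2norm W" using norm_W K_pos by simp
  have strict: "dPhi 1 2 s > 0" if "s > 0" for s using signs_strict[of 2 s] that by simp
  have "dP dPhi \<nu> W \<in> cone" by (rule dP_in_cone[OF W_cone slack summable])
  moreover have "0 < L2norm (dP dPhi \<nu> W)" by (rule L2norm_dP_pos[OF W_cone slack summable W_pos strict])
  ultimately show ?thesis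
    unfolding Top_def muW_def by (rule cone_rescale_in_coneK[OF _ _ W])
qed

end
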